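(* Let $\imath:V\hookrightarrow U$ be an inclusion of regular molecules with $\dim V=\dim U=1$. Then $\imath$ is a submolecule inclusion.
   Context: All posets are finite; $y$ covers $x$ if $x<y$ with nothing strictly between. A finite poset is graded if for each $x$ all maximal covering chains descending from $x$ have the same length $\dim x$; $U_n$ denotes elements of dimension $n$. An oriented graded poset is a finite graded poset with a label $\pm$ on each covering pair; $\Delta^\alpha x$ ($\nabla^\alpha x$) is the set of elements covered by (covering) $x$ with label $\alpha$. For closed (downward closed) $U$, with $\mathrm{cl}$ downward closure, $\max U$ maximal elements, $\dim U$ maximal dimension: $\Delta^\alpha_nU=\{x\in U_n:\nabla^{-\alpha}x\cap U=\emptyset\}$, $\partial^\alpha_nU=\mathrm{cl}(\Delta^\alpha_nU)\cup\bigcup_{k<n}\mathrm{cl}((\max U)_k)$ ($\emptyset$ for $n<0$), $\partial_nU=\partial^-_nU\cup\partial^+_nU$, subscript omitted for $n=\dim U-1$. Maps are functions with $f(\partial^\alpha_n\mathrm{cl}\{x\})=\partial^\alpha_n\mathrm{cl}\{f(x)\}$; inclusions are injective maps. $U\#_kV$ is the pushout of $U\hookleftarrow\partial^+_kU\cong\partial^-_kV\hookrightarrow V$; for $U,V$ of equal dimension $n$ with $\partial U\cong\partial V$ compatibly with $\partial^\pm$, $U\Rightarrow V$ is that pushout with a new element $\top$ of dimension $n+1$, $\Delta^-\top=U_n$, $\Delta^+\top=V_n$. $U$ is round if $\partial^-_nU\cap\partial^+_nU=\partial_{n-1}U$ for all $n<\dim U$. Regular molecules: smallest isomorphism-closed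 class containing the point, closed under $U\#_kV$ ($k<\min(\dim U,\dim V)$) and $U\Rightarrow V$ for round regular molecules of equal dimension. Submolecule inclusions: smallest class of inclusions of regular molecules containing all isomorphisms and the inclusions $U\hookrightarrow U\#_kV\hookleftarrow V$, closed under composition. *)

theory Defs
  imports Main
begin

text \<open>An oriented graded poset is given by a carrier set and, for each sign
(True = +, False = -) and element x, the set faces P a x = Delta^a x of
elements covered by x with label a.\<close>

record 'a ogp =
  elems :: "'a set"
  faces :: "bool \<Rightarrow> 'a \<Rightarrow> 'a set"

definition covers :: "'a ogp \<Rightarrow> 'a \<Rightarrow> 'a \<Rightarrow> bool" where
  "covers P x y \<longleftrightarrow> x \<in> faces P True y \<union> faces P False y"

definition strict_less :: "'a ogp \<Rightarrow> ('a \<times> 'a) set" where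
  "strict_less P = {(x, y). covers P x y}\<^sup>+"

definition le :: "'a ogp \<Rightarrow> 'a \<Rightarrow> 'a \<Rightarrow> bool" where
  "le P x y \<longleftrightarrow> x \<in> elems P \<and> y \<in> elems P \<and> (x = y \<or> (x, y) \<in> strict_less P)"

definition maxchain :: "'a ogp \<Rightarrow> 'a \<Rightarrow> 'a list \<Rightarrow> bool" where
  "maxchain P x cs \<longleftrightarrow> cs \<noteq> [] \<and> hd cs = x \<and>
     (\<forall>i. Suc i < length cs \<longrightarrow> covers P (cs ! Suc i) (cs ! i)) \<and>
     (\<forall>z. \<not> covers P z (last cs))"

definition graded :: "'a ogp \<Rightarrow> bool" where
  "graded P \<longleftrightarrow> (\<forall>x\<in>elems P. \<forall>cs ds. maxchain P x cs \<longrightarrow> maxchain P x ds \<longrightarrow>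
                       length cs = length ds)"

definition ogpos :: "'a ogp \<Rightarrow> bool" where
  "ogpos P \<longleftrightarrow> finite (elems P) \<and>
     (\<forall>a x. faces P a x \<subseteq> elems P) \<and>
     (\<forall>a x. x \<notin> elems P \<longrightarrow> faces P a x = {}) \<and>
     (\<forall>x. faces P True x \<inter> faces P False x = {}) \<and>
     (\<forall>x. (x, x) \<notin> strict_less P) \<and>
     (\<forall>x y z. covers P x y \<longrightarrow> \<not> ((x, z) \<in> strict_less P \<and> (z, y) \<in> strict_less P)) \<and>
     graded P"

definition elem_dim :: "'a ogp \<Rightarrow> 'a \<Rightarrow> nat" where
  "elem_dim P x = (SOME n. \<exists>cs. maxchain P x cs \<and> length cs = Suc n)"

definition set_dim :: "'a ogp \<Rightarrow> 'a set \<Rightarrow> int" where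
  "set_dim P S = Max (insert (-1) ((\<lambda>x. int (elem_dim P x)) ` S))"

definition cl :: "'a ogp \<Rightarrow> 'a set \<Rightarrow> 'a set" where
  "cl P S = {x \<in> elems P. \<exists>y\<in>S. le P x y}"

definition cofaces :: "'a ogp \<Rightarrow> bool \<Rightarrow> 'a \<Rightarrow> 'a set" where
  "cofaces P a x = {y \<in> elems P. x \<in> faces P a y}"

definition maxel :: "'a ogp \<Rightarrow> 'a set \<Rightarrow> 'a set" where
  "maxel P S = {x \<in> S. \<forall>y\<in>S. le P x y \<longrightarrow> y = x}"

definition Delta_n :: "'a ogp \<Rightarrow> bool \<Rightarrow> int \<Rightarrow> 'a set \<Rightarrow> 'a set" where
  "Delta_n P a n U = {x \<in> U. int (elem_dim P x) = n \<and> cofaces P (\<not> a) x \<inter> U = {}}"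

definition bdm :: "'a ogp \<Rightarrow> bool \<Rightarrow> int \<Rightarrow> 'a set \<Rightarrow> 'a set" where
  "bdm P a n U = (if n < 0 then {} else
      cl P (Delta_n P a n U) \<union> (\<Union>x\<in>{x \<in> maxel P U. int (elem_dim P x) < n}. cl P {x}))"

definition bdn :: "'a ogp \<Rightarrow> int \<Rightarrow> 'a set \<Rightarrow> 'a set" where
  "bdn P n U = bdm P False n U \<union> bdm P True n U"

definition ogp_dim :: "'a ogp \<Rightarrow> int" where
  "ogp_dim P = set_dim P (elems P)"

definition bd :: "'a ogp \<Rightarrow> bool \<Rightarrow> 'a set" where
  "bd P a = bdm P a (ogp_dim P - 1) (elems P)"

definition bd_all :: "'a ogp \<Rightarrow> 'a set" where
  "bd_all P = bdn P (ogp_dim P - 1) (elems P)"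

definition restrict_ogp :: "'a ogp \<Rightarrow> 'a set \<Rightarrow> 'a ogp" where
  "restrict_ogp P S = \<lparr>elems = S, faces = (\<lambda>a x. if x \<in> S then faces P a x \<inter> S else {})\<rparr>"

definition round :: "'a ogp \<Rightarrow> bool" where
  "round P \<longleftrightarrow> (\<forall>n::int. n < ogp_dim P \<longrightarrow>
      bdm P False n (elems P) \<inter> bdm P True n (elems P) = bdn P (n - 1) (elems P))"

definition is_map :: "('a \<Rightarrow> 'b) \<Rightarrow> 'a ogp \<Rightarrow> 'b ogp \<Rightarrow> bool" where
  "is_map f P Q \<longleftrightarrow> (\<forall>x\<in>elems P. f x \<in> elems Q) \<and>
     (\<forall>x\<in>elems P. \<forall>a n. f ` bdm P a n (cl P {x}) = bdm Q a n (cl Q {f x}))"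

definition inclusion :: "('a \<Rightarrow> 'b) \<Rightarrow> 'a ogp \<Rightarrow> 'b ogp \<Rightarrow> bool" where
  "inclusion f P Q \<longleftrightarrow> ogpos P \<and> ogpos Q \<and> is_map f P Q \<and> inj_on f (elems P)"

definition iso :: "('a \<Rightarrow> 'b) \<Rightarrow> 'a ogp \<Rightarrow> 'b ogp \<Rightarrow> bool" where
  "iso f P Q \<longleftrightarrow> bij_betw f (elems P) (elems Q) \<and>
     (\<forall>x\<in>elems P. \<forall>a. f ` faces P a x = faces Q a (f x))"

datatype elt = Pt | Lf elt | Rt elt | Top

definition point_ogp :: "elt ogp" where
  "point_ogp = \<lparr>elems = {Pt}, faces = (\<lambda>a x. {})\<rparr>"

text \<open>Gluing Q onto P along a closed S in Q, identified with a subset of P via phi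
(pushout P <- S -> Q).\<close>
definition glue_inr :: "elt set \<Rightarrow> (elt \<Rightarrow> elt) \<Rightarrow> elt \<Rightarrow> elt" where
  "glue_inr S phi y = (if y \<in> S then Lf (phi y) else Rt y)"

definition glue_faces :: "elt ogp \<Rightarrow> elt ogp \<Rightarrow> elt set \<Rightarrow> (elt \<Rightarrow> elt) \<Rightarrow> bool \<Rightarrow> elt \<Rightarrow> elt set" where
  "glue_faces P Q S phi a e = (case e of
       Lf x \<Rightarrow> (if x \<in> elems P then Lf ` faces P a x else {})
     | Rt y \<Rightarrow> (if y \<in> elems Q - S then glue_inr S phi ` faces Q a y else {})
     | _ \<Rightarrow> {})"

definition glue :: "elt ogp \<Rightarrow> elt ogp \<Rightarrow> elt set \<Rightarrow> (elt \<Rightarrow> elt) \<Rightarrow> elt ogp" where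
  "glue P Q S phi = \<lparr>elems = Lf ` elems P \<union> Rt ` (elems Q - S),
                     faces = glue_faces P Q S phi\<rparr>"

definition paste :: "nat \<Rightarrow> elt ogp \<Rightarrow> elt ogp \<Rightarrow> (elt \<Rightarrow> elt) \<Rightarrow> elt ogp" where
  "paste k P Q phi = glue P Q (bdm Q False (int k) (elems Q)) phi"

definition paste_inr :: "nat \<Rightarrow> elt ogp \<Rightarrow> (elt \<Rightarrow> elt) \<Rightarrow> elt \<Rightarrow> elt" where
  "paste_inr k Q phi = glue_inr (bdm Q False (int k) (elems Q)) phi"

definition paste_ok :: "nat \<Rightarrow> elt ogp \<Rightarrow> elt ogp \<Rightarrow> (elt \<Rightarrow> elt) \<Rightarrow> bool" where
  "paste_ok k P Q phi \<longleftrightarrow> int k < ogp_dim P \<and> int k < ogp_dim Q \<and>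
     iso phi (restrict_ogp Q (bdm Q False (int k) (elems Q)))
             (restrict_ogp P (bdm P True (int k) (elems P)))"

definition arrow :: "elt ogp \<Rightarrow> elt ogp \<Rightarrow> (elt \<Rightarrow> elt) \<Rightarrow> elt ogp" where
  "arrow P Q phi = \<lparr>elems = insert Top (elems (glue P Q (bd_all Q) phi)),
     faces = (\<lambda>a e. if e = Top then
                (if a then glue_inr (bd_all Q) phi ` {y \<in> elems Q. int (elem_dim Q y) = ogp_dim Q}
                 else Lf ` {x \<in> elems P. int (elem_dim P x) = ogp_dim P})
              else glue_faces P Q (bd_all Q) phi a e)\<rparr>"

definition arrow_ok :: "elt ogp \<Rightarrow> elt ogp \<Rightarrow> (elt \<Rightarrow> elt) \<Rightarrow> bool" where
  "arrow_ok P Q phi \<longleftrightarrow> round P \<and> round Q \<and> ogp_dim P = ogp_dim Q \<and>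
     iso phi (restrict_ogp Q (bd_all Q)) (restrict_ogp P (bd_all P)) \<and>
     (\<forall>a. phi ` bd Q a = bd P a)"

inductive regmolE :: "elt ogp \<Rightarrow> bool" where
  point: "regmolE point_ogp"
| iso: "regmolE P \<Longrightarrow> ogpos Q \<Longrightarrow> iso f P Q \<Longrightarrow> regmolE Q"
| paste: "regmolE P \<Longrightarrow> regmolE Q \<Longrightarrow> paste_ok k P Q phi \<Longrightarrow> regmolE (paste k P Q phi)"
| arrow: "regmolE P \<Longrightarrow> regmolE Q \<Longrightarrow> arrow_ok P Q phi \<Longrightarrow> regmolE (arrow P Q phi)"

inductive subincE :: "(elt \<Rightarrow> elt) \<Rightarrow> elt ogp \<Rightarrow> elt ogp \<Rightarrow> bool" where
  iso: "regmolE P \<Longrightarrow> regmolE Q \<Longrightarrow> iso f P Q \<Longrightarrow> subincE f P Q"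
| inl: "regmolE P \<Longrightarrow> regmolE Q \<Longrightarrow> paste_ok k P Q phi \<Longrightarrow> subincE Lf P (paste k P Q phi)"
| inr: "regmolE P \<Longrightarrow> regmolE Q \<Longrightarrow> paste_ok k P Q phi \<Longrightarrow>
          subincE (paste_inr k Q phi) Q (paste k P Q phi)"
| comp: "subincE f P Q \<Longrightarrow> subincE g Q R \<Longrightarrow> subincE (g \<circ> f) P R"

definition regular_molecule :: "'a ogp \<Rightarrow> bool" where
  "regular_molecule U \<longleftrightarrow> ogpos U \<and> (\<exists>P f. regmolE P \<and> iso f P U)"

definition submolecule_inclusion :: "('a \<Rightarrow> 'b) \<Rightarrow> 'a ogp \<Rightarrow> 'b ogp \<Rightarrow> bool" where
  "submolecule_inclusion i V U \<longleftrightarrow> inclusion i V U \<and>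
     (\<exists>V' U' a b g. subincE g V' U' \<and> iso a V V' \<and> iso b U U' \<and>
        (\<forall>x\<in>elems V. b (i x) = g (a x)))"

end

theory Submission
  imports Defs
begin

text \<open>
  Every regular molecule of dimension 1 is isomorphic to a path.  Along the inductive construction
  all molecules admit a rank function; a pasting is at least as high-dimensional as its factors and
  an arrow is one dimension higher than its source, so a 1-dimensional molecule is either an arrow
  between two points (a single edge) or a pasting of two 1-dimensional molecules along a vertex
  (again a path).  A map preserves the input and output vertices of each edge, so an inclusion of
  a path with m edges into a path with n edges is a shift by some s with s + m \<le> n.  Such a shift
  is the inclusion of the path as the second factor of a pasting with a path of length s,
  followed by the inclusion as the first factor of a pasting with a path of length n - s - m.
\<close>

section \<open>Rank functions\<close>

text \<open>The conditions of \<^const>\<open>ogpos\<close> that do not involve the order; a rank function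
  provides the remaining ones.\<close>

definition wf_ogp :: "'a ogp \<Rightarrow> bool" where
  "wf_ogp P \<longleftrightarrow> finite (elems P) \<and> (\<forall>a x. faces P a x \<subseteq> elems P) \<and>
     (\<forall>a x. x \<notin> elems P \<longrightarrow> faces P a x = {}) \<and>
     (\<forall>x. faces P True x \<inter> faces P False x = {})"

definition rank_function :: "'a ogp \<Rightarrow> ('a \<Rightarrow> nat) \<Rightarrow> bool" where
  "rank_function P d \<longleftrightarrow> (\<forall>x\<in>elems P. \<forall>z. covers P z x \<longrightarrow> d x = Suc (d z)) \<and>
     (\<forall>x\<in>elems P. (\<forall>z. \<not> covers P z x) \<longrightarrow> d x = 0)"

lemma ogpos_imp_wf_ogp: "ogpos P \<Longrightarrow> wf_ogp P"
  unfolding ogpos_def wf_ogp_def by blast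

lemma wf_ogp_faces_subset: "wf_ogp P \<Longrightarrow> faces P a x \<subseteq> elems P"
  unfolding wf_ogp_def by simp

lemma wf_ogp_finite: "wf_ogp P \<Longrightarrow> finite (elems P)"
  unfolding wf_ogp_def by simp

lemma covers_iff_face: "covers P z x \<longleftrightarrow> (\<exists>a. z \<in> faces P a x)"
  unfolding covers_def by (metis Un_iff)

lemma covers_elems: "wf_ogp P \<Longrightarrow> covers P x y \<Longrightarrow> x \<in> elems P \<and> y \<in> elems P"
  unfolding wf_ogp_def covers_def by (metis UnE empty_iff subsetD)

lemma rank_function_covers: "wf_ogp P \<Longrightarrow> rank_function P d \<Longrightarrow> covers P x y \<Longrightarrow> d y = Suc (d x)"
  using covers_elems unfolding rank_function_def by metis

lemma strict_less_rank:
  assumes "wf_ogp P" "rank_function P d" "(x, y) \<in> strict_less P"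
  shows "x \<in> elems P \<and> y \<in> elems P \<and> d x < d y"
  using assms(3) unfolding strict_less_def
  by (induction rule: trancl_induct)
     (use covers_elems[OF assms(1)] rank_function_covers[OF assms(1,2)] in force)+

lemma maxchain_singleton: "maxchain P x [x] \<longleftrightarrow> (\<forall>z. \<not> covers P z x)"
  unfolding maxchain_def by auto

lemma maxchain_Cons_Cons:
  "maxchain P x (x # y # cs) \<longleftrightarrow> covers P y x \<and> maxchain P y (y # cs)"
  unfolding maxchain_def by (simp add: All_less_Suc2)

lemma maxchain_length_rank:
  assumes "wf_ogp P" "rank_function P d"
  shows "maxchain P x cs \<Longrightarrow> x \<in> elems P \<Longrightarrow> length cs = Suc (d x)"
proof (induction cs arbitrary: x)
  case Nil
  then show ?case by (simp add: maxchain_def)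
next
  case (Cons c cs)
  then have "c = x" by (simp add: maxchain_def)
  show ?case
  proof (cases cs)
    case Nil
    then have "\<forall>z. \<not> covers P z x" using Cons.prems \<open>c = x\<close> maxchain_singleton by metis
    then show ?thesis using assms(2) Cons.prems(2) Nil unfolding rank_function_def by simp
  next
    case (Cons y ys)
    then have yx: "covers P y x" and "maxchain P y (y # ys)"
      using Cons.prems \<open>c = x\<close> maxchain_Cons_Cons by metis+
    then have "length cs = Suc (d y)"
      using Cons.IH Cons covers_elems[OF assms(1) yx] by simp
    then show ?thesis using rank_function_covers[OF assms yx] by simp
  qed
qed

lemma maxchain_exists_rank:
  assumes "wf_ogp P" "rank_function P d"
  shows "x \<in> elems P \<Longrightarrow> \<exists>cs. maxchain P x cs \<and> length cs = Suc (d x)"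
proof (induction "d x" arbitrary: x)
  case 0
  then have "\<forall>z. \<not> covers P z x" using rank_function_covers[OF assms] by (metis nat.distinct(1))
  then show ?case using maxchain_singleton 0 by fastforce
next
  case (Suc n)
  then obtain z where z: "covers P z x"
    using assms(2) unfolding rank_function_def by (metis nat.distinct(1))
  then have "d z = n" "z \<in> elems P"
    using rank_function_covers[OF assms z] Suc.hyps(2) covers_elems[OF assms(1) z] by auto
  then obtain cs where cs: "maxchain P z cs" "length cs = Suc n" using Suc.hyps(1) by metis
  then obtain zs where "cs = z # zs" unfolding maxchain_def by (cases cs) auto
  then have "maxchain P x (x # cs)" using maxchain_Cons_Cons z cs(1) by metis
  then show ?case using cs(2) Suc.hyps(2) by auto
qed

lemma elem_dim_rank:
  assumes "wf_ogp P" "rank_function P d" "x \<in> elems P"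
  shows "elem_dim P x = d x"
proof -
  have "\<exists>n cs. maxchain P x cs \<and> length cs = Suc n"
    using maxchain_exists_rank[OF assms] by blast
  then have "\<exists>cs. maxchain P x cs \<and> length cs = Suc (elem_dim P x)"
    unfolding elem_dim_def by (rule someI_ex)
  then show ?thesis using maxchain_length_rank[OF assms(1,2)] assms(3) by fastforce
qed

lemma ogpos_if_rank_function:
  assumes "wf_ogp P" "rank_function P d"
  shows "ogpos P"
proof -
  have "graded P" unfolding graded_def using maxchain_length_rank[OF assms] by metis
  moreover have "\<forall>x. (x, x) \<notin> strict_less P" using strict_less_rank[OF assms] by blast
  moreover have "\<forall>x y z. covers P x y \<longrightarrow> \<not> ((x, z) \<in> strict_less P \<and> (z, y) \<in> strict_less P)"
    using strict_less_rank[OF assms] rank_function_covers[OF assms]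
    by (metis Suc_lessE less_irrefl_nat less_trans_Suc)
  ultimately show ?thesis using assms(1) unfolding ogpos_def wf_ogp_def by blast
qed

lemma ogp_dim_rank:
  assumes "wf_ogp P" "rank_function P d" "elems P \<noteq> {}"
  obtains x where "x \<in> elems P" "ogp_dim P = int (d x)" "\<forall>y\<in>elems P. d y \<le> d x"
proof -
  have fin: "finite (elems P)" using wf_ogp_finite[OF assms(1)] .
  have "Max (d ` elems P) \<in> d ` elems P" using fin assms(3) by simp
  then obtain x where x: "x \<in> elems P" "d x = Max (d ` elems P)" by (metis imageE)
  have le: "\<forall>y\<in>elems P. d y \<le> d x" using x(2) fin by simp
  have "ogp_dim P = Max (insert (-1) ((\<lambda>x. int (d x)) ` elems P))"
    unfolding ogp_dim_def set_dim_def using elem_dim_rank[OF assms(1,2)] by simp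
  also have "\<dots> = int (d x)"
    by (rule Max_eqI) (use fin x(1) le in auto)
  finally show ?thesis using that x(1) le by blast
qed

section \<open>Isomorphisms\<close>

lemma iso_bij: "iso f P Q \<Longrightarrow> bij_betw f (elems P) (elems Q)"
  unfolding iso_def by simp

lemma iso_faces: "iso f P Q \<Longrightarrow> x \<in> elems P \<Longrightarrow> f ` faces P a x = faces Q a (f x)"
  unfolding iso_def by simp

lemma iso_elems: "iso f P Q \<Longrightarrow> elems Q = f ` elems P"
  using iso_bij bij_betw_def by metis

lemma iso_in: "iso f P Q \<Longrightarrow> x \<in> elems P \<Longrightarrow> f x \<in> elems Q"
  using iso_bij bij_betw_apply by metis

lemma iso_inj: "iso f P Q \<Longrightarrow> x \<in> elems P \<Longrightarrow> y \<in> elems P \<Longrightarrow> f x = f y \<longleftrightarrow> x = y"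
  using iso_bij by (metis bij_betw_def inj_on_def)

lemma iso_inv_into_f: "iso f P Q \<Longrightarrow> x \<in> elems P \<Longrightarrow> inv_into (elems P) f (f x) = x"
  using iso_bij bij_betw_def inv_into_f_f by metis

lemma iso_f_inv_into: "iso f P Q \<Longrightarrow> y \<in> elems Q \<Longrightarrow> f (inv_into (elems P) f y) = y"
  using iso_bij bij_betw_inv_into_right by metis

lemma iso_inv_into_in: "iso f P Q \<Longrightarrow> y \<in> elems Q \<Longrightarrow> inv_into (elems P) f y \<in> elems P"
  using iso_bij by (metis bij_betw_imp_surj_on inv_into_into)

lemma iso_inv:
  assumes "wf_ogp P" "iso f P Q"
  shows "iso (inv_into (elems P) f) Q P"
proof -
  let ?g = "inv_into (elems P) f"
  have "?g ` faces Q a y = faces P a (?g y)" if y: "y \<in> elems Q" for a y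
  proof -
    have "faces Q a y = f ` faces P a (?g y)"
      using iso_faces[OF assms(2) iso_inv_into_in[OF assms(2) y]] iso_f_inv_into[OF assms(2) y] by simp
    moreover have "?g ` f ` faces P a (?g y) = faces P a (?g y)"
      using wf_ogp_faces_subset[OF assms(1)] iso_bij[OF assms(2)] bij_betw_def inv_into_image_cancel
      by metis
    ultimately show ?thesis by simp
  qed
  then show ?thesis unfolding iso_def using bij_betw_inv_into[OF iso_bij[OF assms(2)]] by blast
qed

lemma iso_id: "iso id P P"
  unfolding iso_def by simp

lemma iso_comp:
  assumes "iso f P Q" "iso g Q R"
  shows "iso (g \<circ> f) P R"
proof -
  have "(g \<circ> f) ` faces P a x = faces R a ((g \<circ> f) x)" if "x \<in> elems P" for a x
    unfolding image_comp[symmetric]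
    using iso_faces[OF assms(1) that] iso_faces[OF assms(2) iso_in[OF assms(1) that]] by simp
  then show ?thesis
    unfolding iso_def using iso_bij[OF assms(1)] iso_bij[OF assms(2)] bij_betw_trans by blast
qed

lemma iso_covers:
  assumes "wf_ogp P" "iso f P Q" "covers P x y"
  shows "covers Q (f x) (f y)"
proof -
  obtain a where "x \<in> faces P a y" using assms(3) covers_iff_face by metis
  then have "f x \<in> faces Q a (f y)" using iso_faces[OF assms(2)] covers_elems[OF assms(1,3)] by blast
  then show ?thesis using covers_iff_face by metis
qed

lemma rank_function_iso:
  assumes "wf_ogp P" "rank_function P d" "iso f P Q"
  shows "rank_function Q (d \<circ> inv_into (elems P) f)"
proof -
  let ?g = "inv_into (elems P) f"
  have covers_inv: "covers Q z y \<longleftrightarrow> (\<exists>x. z = f x \<and> covers P x (?g y))" if y: "y \<in> elems Q" for y z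
  proof -
    have "faces Q a y = f ` faces P a (?g y)" for a
      using iso_faces[OF assms(3) iso_inv_into_in[OF assms(3) y]] iso_f_inv_into[OF assms(3) y] by simp
    then show ?thesis unfolding covers_iff_face by auto
  qed
  have "d (?g y) = Suc (d (?g z))" if y: "y \<in> elems Q" and yz: "covers Q z y" for y z
  proof -
    obtain x where x: "z = f x" "covers P x (?g y)" using covers_inv[OF y] yz by blast
    then have "?g z = x" using iso_inv_into_f[OF assms(3)] covers_elems[OF assms(1)] by blast
    then show ?thesis using rank_function_covers[OF assms(1,2) x(2)] by simp
  qed
  moreover have "d (?g y) = 0" if "y \<in> elems Q" "\<forall>z. \<not> covers Q z y" for y
    using assms(2) covers_inv[OF that(1)] that iso_inv_into_in[OF assms(3)]
    unfolding rank_function_def by blast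
  ultimately show ?thesis unfolding rank_function_def by simp
qed

lemma iso_elem_dim:
  assumes "wf_ogp P" "wf_ogp Q" "rank_function P d" "iso f P Q" "x \<in> elems P"
  shows "elem_dim Q (f x) = elem_dim P x"
  using elem_dim_rank[OF assms(2) rank_function_iso[OF assms(1,3,4)] iso_in[OF assms(4,5)]]
    iso_inv_into_f[OF assms(4,5)] elem_dim_rank[OF assms(1,3,5)] by simp

lemma iso_ogp_dim:
  assumes "wf_ogp P" "wf_ogp Q" "rank_function P d" "iso f P Q"
  shows "ogp_dim Q = ogp_dim P"
proof -
  have "(\<lambda>x. int (elem_dim Q x)) ` elems Q = (\<lambda>x. int (elem_dim P x)) ` elems P"
    using iso_elem_dim[OF assms] iso_elems[OF assms(4)] by (simp add: image_image)
  then show ?thesis unfolding ogp_dim_def set_dim_def by simp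
qed

lemma iso_strict_less:
  assumes "wf_ogp P" "iso f P Q" "(x, y) \<in> strict_less P"
  shows "(f x, f y) \<in> strict_less Q"
  using assms(3) unfolding strict_less_def
proof (induction rule: trancl_induct)
  case (base y)
  then show ?case using iso_covers[OF assms(1,2)] by auto
next
  case (step y z)
  then show ?case using iso_covers[OF assms(1,2)] by (simp add: trancl_into_trancl)
qed

lemma iso_le:
  assumes "wf_ogp P" "wf_ogp Q" "iso f P Q" "x \<in> elems P" "y \<in> elems P"
  shows "le Q (f x) (f y) \<longleftrightarrow> le P x y"
proof
  assume "le P x y"
  then show "le Q (f x) (f y)"
    unfolding le_def using iso_strict_less[OF assms(1,3)] iso_in[OF assms(3)] by metis
next
  assume "le Q (f x) (f y)"
  then have "f x = f y \<or> (f x, f y) \<in> strict_less Q" unfolding le_def by simp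
  then have "x = y \<or> (x, y) \<in> strict_less P"
    using iso_strict_less[OF assms(2) iso_inv[OF assms(1,3)], of "f x" "f y"]
      iso_inv_into_f[OF assms(3)] assms(4,5) by metis
  then show "le P x y" unfolding le_def using assms(4,5) by simp
qed

lemma iso_cl:
  assumes "wf_ogp P" "wf_ogp Q" "iso f P Q" "S \<subseteq> elems P"
  shows "f ` cl P S = cl Q (f ` S)"
proof
  show "f ` cl P S \<subseteq> cl Q (f ` S)"
    unfolding cl_def using iso_le[OF assms(1-3)] assms(4) iso_in[OF assms(3)] by blast
next
  show "cl Q (f ` S) \<subseteq> f ` cl P S"
  proof
    fix z
    assume "z \<in> cl Q (f ` S)"
    then obtain y where z: "z \<in> elems Q" "y \<in> S" "le Q z (f y)" unfolding cl_def by blast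
    define x where "x = inv_into (elems P) f z"
    have x: "x \<in> elems P" "f x = z"
      using iso_inv_into_in[OF assms(3) z(1)] iso_f_inv_into[OF assms(3) z(1)] x_def by auto
    then have "le P x y" using iso_le[OF assms(1-3) x(1)] z assms(4) by blast
    then show "z \<in> f ` cl P S" unfolding cl_def using x z by blast
  qed
qed

lemma iso_cofaces_disjoint:
  assumes "wf_ogp P" "iso f P Q" "S \<subseteq> elems P" "x \<in> elems P"
  shows "cofaces Q a (f x) \<inter> f ` S = {} \<longleftrightarrow> cofaces P a x \<inter> S = {}"
proof -
  have "f x \<in> faces Q a (f y) \<longleftrightarrow> x \<in> faces P a y" if "y \<in> S" for y
    using iso_faces[OF assms(2), of y a] iso_inj[OF assms(2)] assms(3,4) that
      wf_ogp_faces_subset[OF assms(1)] by blast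
  then show ?thesis unfolding cofaces_def using assms(3) iso_in[OF assms(2)] by blast
qed

lemma image_Collect_cong:
  "(\<And>x. x \<in> M \<Longrightarrow> q (f x) \<longleftrightarrow> p x) \<Longrightarrow> f ` {x \<in> M. p x} = {y \<in> f ` M. q y}"
  by auto

lemma iso_Delta_n:
  assumes "wf_ogp P" "wf_ogp Q" "rank_function P d" "iso f P Q" "S \<subseteq> elems P"
  shows "f ` Delta_n P a n S = Delta_n Q a n (f ` S)"
  unfolding Delta_n_def
  by (rule image_Collect_cong)
     (simp add: iso_elem_dim[OF assms(1-4)] iso_cofaces_disjoint[OF assms(1,4,5)] subsetD[OF assms(5)])

lemma iso_maxel:
  assumes "wf_ogp P" "wf_ogp Q" "iso f P Q" "S \<subseteq> elems P"
  shows "f ` maxel P S = maxel Q (f ` S)"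
  unfolding maxel_def
  by (rule image_Collect_cong) (use iso_le[OF assms(1-3)] iso_inj[OF assms(3)] assms(4) in blast)

lemma iso_bdm:
  assumes "wf_ogp P" "wf_ogp Q" "rank_function P d" "iso f P Q" "S \<subseteq> elems P"
  shows "f ` bdm P a n S = bdm Q a n (f ` S)"
proof (cases "n < 0")
  case True
  then show ?thesis unfolding bdm_def by simp
next
  case False
  have D: "Delta_n P a n S \<subseteq> elems P" using assms(5) unfolding Delta_n_def by auto
  have M: "maxel P S \<subseteq> elems P" using assms(5) unfolding maxel_def by auto
  have "f ` cl P (Delta_n P a n S) = cl Q (Delta_n Q a n (f ` S))"
    using iso_cl[OF assms(1,2,4) D] iso_Delta_n[OF assms] by simp
  moreover have low: "f ` {x \<in> maxel P S. int (elem_dim P x) < n} =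
      {y \<in> maxel Q (f ` S). int (elem_dim Q y) < n}"
    unfolding iso_maxel[OF assms(1,2,4,5), symmetric]
    by (rule image_Collect_cong) (use iso_elem_dim[OF assms(1-4)] M in auto)
  moreover have "f ` cl P {x} = cl Q {f x}" if "x \<in> maxel P S" for x
    using iso_cl[OF assms(1,2,4), of "{x}"] M that by auto
  ultimately show ?thesis
    unfolding bdm_def using False by (simp add: image_Un image_UN low[symmetric] image_image)
qed

section \<open>Closures and boundaries\<close>

definition face_closed :: "'a ogp \<Rightarrow> 'a set \<Rightarrow> bool" where
  "face_closed P S \<longleftrightarrow> S \<subseteq> elems P \<and> (\<forall>x\<in>S. \<forall>a. faces P a x \<subseteq> S)"

lemma cl_subset: "cl P T \<subseteq> elems P"
  unfolding cl_def by auto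

lemma cl_rank:
  assumes "wf_ogp P" "rank_function P d" "x \<in> cl P T"
  obtains y where "y \<in> T" "d x \<le> d y"
proof -
  obtain y where y: "y \<in> T" "le P x y" using assms(3) unfolding cl_def by blast
  then have "d x \<le> d y" using strict_less_rank[OF assms(1,2)] unfolding le_def by fastforce
  then show ?thesis using that y by blast
qed

lemma face_closed_cl:
  assumes "wf_ogp P"
  shows "face_closed P (cl P T)"
  unfolding face_closed_def
proof (intro conjI ballI allI subsetI)
  show "x \<in> cl P T \<Longrightarrow> x \<in> elems P" for x unfolding cl_def by blast
next
  fix x a z
  assume x: "x \<in> cl P T" and z: "z \<in> faces P a x"
  obtain y where y: "y \<in> T" "le P x y" using x unfolding cl_def by blast
  have zx: "covers P z x" using z covers_iff_face by metis
  then have "(z, x) \<in> strict_less P" unfolding strict_less_def by auto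
  moreover have "x = y \<or> (x, y) \<in> strict_less P" using y(2) unfolding le_def by simp
  ultimately have "(z, y) \<in> strict_less P" unfolding strict_less_def by (metis trancl_trans)
  moreover have "y \<in> elems P" using y(2) unfolding le_def by simp
  ultimately have "le P z y" unfolding le_def using covers_elems[OF assms zx] by simp
  then show "z \<in> cl P T" unfolding cl_def using covers_elems[OF assms zx] y(1) by blast
qed

lemma face_closed_empty: "face_closed P {}"
  unfolding face_closed_def by simp

lemma face_closed_Un: "face_closed P A \<Longrightarrow> face_closed P B \<Longrightarrow> face_closed P (A \<union> B)"
  unfolding face_closed_def by blast

lemma face_closed_UN: "(\<And>i. i \<in> I \<Longrightarrow> face_closed P (A i)) \<Longrightarrow> face_closed P (\<Union>i\<in>I. A i)"
  unfolding face_closed_def by (simp add: UN_subset_iff) (meson UN_upper subset_trans)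

lemma face_closed_bdm: "wf_ogp P \<Longrightarrow> face_closed P (bdm P b n U)"
  unfolding bdm_def by (simp add: face_closed_empty face_closed_Un face_closed_UN face_closed_cl)

lemma face_closed_bdn: "wf_ogp P \<Longrightarrow> face_closed P (bdn P n U)"
  unfolding bdn_def by (intro face_closed_Un face_closed_bdm)

lemma bdm_rank:
  assumes "wf_ogp P" "rank_function P d" "U \<subseteq> elems P" "x \<in> bdm P a n U"
  shows "int (d x) \<le> n"
proof -
  obtain y where y: "y \<in> U" "int (elem_dim P y) \<le> n" "x \<in> cl P {y}"
  proof (cases "x \<in> cl P (Delta_n P a n U)")
    case True
    then obtain y where "y \<in> Delta_n P a n U" "x \<in> cl P {y}" unfolding cl_def by blast
    then show ?thesis unfolding Delta_n_def by (auto intro: that)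
  next
    case False
    then show ?thesis using that assms(4) unfolding bdm_def maxel_def
      by (auto split: if_splits)
  qed
  obtain z where "z \<in> {y}" "d x \<le> d z" using cl_rank[OF assms(1,2) y(3)] .
  then show ?thesis using y elem_dim_rank[OF assms(1,2)] assms(3) by fastforce
qed

lemma bdn_rank:
  "wf_ogp P \<Longrightarrow> rank_function P d \<Longrightarrow> U \<subseteq> elems P \<Longrightarrow> x \<in> bdn P n U \<Longrightarrow> int (d x) \<le> n"
  unfolding bdn_def by (metis UnE bdm_rank)

section \<open>Gluing ranked posets\<close>

lemma restrict_ogp_elems [simp]: "elems (restrict_ogp P S) = S"
  unfolding restrict_ogp_def by simp

lemma restrict_ogp_faces: "face_closed P S \<Longrightarrow> x \<in> S \<Longrightarrow> faces (restrict_ogp P S) a x = faces P a x"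
  unfolding restrict_ogp_def face_closed_def by auto

lemma wf_ogp_restrict: "wf_ogp P \<Longrightarrow> S \<subseteq> elems P \<Longrightarrow> wf_ogp (restrict_ogp P S)"
  unfolding wf_ogp_def restrict_ogp_def by (auto intro: finite_subset)

lemma rank_function_restrict:
  assumes "face_closed P S" "rank_function P d"
  shows "rank_function (restrict_ogp P S) d"
proof -
  have "covers (restrict_ogp P S) z x \<longleftrightarrow> covers P z x" if "x \<in> S" for x z
    unfolding covers_def using restrict_ogp_faces[OF assms(1) that] by simp
  moreover have "S \<subseteq> elems P" using assms(1) unfolding face_closed_def by simp
  ultimately show ?thesis using assms(2) unfolding rank_function_def by auto
qed

locale ranked_gluing =
  fixes P Q :: "elt ogp" and S S' :: "elt set" and phi :: "elt \<Rightarrow> elt" and dP dQ :: "elt \<Rightarrow> nat"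
  assumes wf_P: "wf_ogp P" and wf_Q: "wf_ogp Q"
    and rank_P: "rank_function P dP" and rank_Q: "rank_function Q dQ"
    and closed_S: "face_closed Q S" and closed_S': "face_closed P S'"
    and iso_phi: "iso phi (restrict_ogp Q S) (restrict_ogp P S')"
begin

abbreviation "G \<equiv> glue P Q S phi"
abbreviation "inr \<equiv> glue_inr S phi"

definition glue_rank :: "elt \<Rightarrow> nat" where
  "glue_rank e = (case e of Lf x \<Rightarrow> dP x | Rt y \<Rightarrow> dQ y | _ \<Rightarrow> 0)"

lemma S_subset: "S \<subseteq> elems Q" and S'_subset: "S' \<subseteq> elems P"
  using closed_S closed_S' unfolding face_closed_def by simp_all

lemma phi_rank: "s \<in> S \<Longrightarrow> dP (phi s) = dQ s"
proof -
  assume s: "s \<in> S"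
  have wf: "wf_ogp (restrict_ogp Q S)" "wf_ogp (restrict_ogp P S')"
    using wf_ogp_restrict wf_P wf_Q S_subset S'_subset by auto
  have rk: "rank_function (restrict_ogp Q S) dQ" "rank_function (restrict_ogp P S') dP"
    using rank_function_restrict closed_S closed_S' rank_P rank_Q by auto
  have "dP (phi s) = elem_dim (restrict_ogp P S') (phi s)"
    using elem_dim_rank[OF wf(2) rk(2)] iso_in[OF iso_phi] s by simp
  also have "\<dots> = elem_dim (restrict_ogp Q S) s"
    using iso_elem_dim[OF wf rk(1) iso_phi] s by simp
  also have "\<dots> = dQ s" using elem_dim_rank[OF wf(1) rk(1)] s by simp
  finally show ?thesis .
qed

lemma glue_elems: "elems G = Lf ` elems P \<union> Rt ` (elems Q - S)"
  unfolding glue_def by simp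

lemma glue_elemsE:
  assumes "e \<in> elems G"
  obtains x where "e = Lf x" "x \<in> elems P" | y where "e = Rt y" "y \<in> elems Q - S"
  using assms unfolding glue_elems by blast

lemma glue_faces_Lf: "x \<in> elems P \<Longrightarrow> faces G a (Lf x) = Lf ` faces P a x"
  unfolding glue_def glue_faces_def by simp

lemma glue_faces_Rt: "y \<in> elems Q - S \<Longrightarrow> faces G a (Rt y) = inr ` faces Q a y"
  unfolding glue_def glue_faces_def by simp

lemma glue_faces_outside: "e \<notin> elems G \<Longrightarrow> faces G a e = {}"
  unfolding glue_def glue_faces_def by (cases e) auto

lemma inr_in: "y \<in> elems Q \<Longrightarrow> inr y \<in> elems G"
  unfolding glue_elems glue_inr_def using iso_in[OF iso_phi] S'_subset by auto

lemma inr_rank: "y \<in> elems Q \<Longrightarrow> glue_rank (inr y) = dQ y"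
  unfolding glue_inr_def glue_rank_def using phi_rank by auto

lemma inj_on_inr: "inj_on inr (elems Q)"
  unfolding glue_inr_def inj_on_def using iso_inj[OF iso_phi] by auto

lemma wf_glue: "wf_ogp G"
proof -
  have "finite (elems G)" unfolding glue_elems using wf_ogp_finite[OF wf_P] wf_ogp_finite[OF wf_Q] by simp
  moreover have "faces G a e \<subseteq> elems G" for a e
  proof (cases "e \<in> elems G")
    case True
    then show ?thesis
    proof (cases rule: glue_elemsE)
      case (1 x)
      then show ?thesis
        using glue_faces_Lf wf_ogp_faces_subset[OF wf_P, of a x] unfolding glue_elems by auto
    next
      case (2 y)
      then show ?thesis using glue_faces_Rt inr_in wf_ogp_faces_subset[OF wf_Q, of a y] by auto
    qed
  qed (simp add: glue_faces_outside)
  moreover have "faces G True e \<inter> faces G False e = {}" for e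
  proof (cases "e \<in> elems G")
    case True
    have disj: "faces P True x \<inter> faces P False x = {}" "faces Q True y \<inter> faces Q False y = {}" for x y
      using wf_P wf_Q unfolding wf_ogp_def by simp_all
    from True show ?thesis
    proof (cases rule: glue_elemsE)
      case (1 x)
      then show ?thesis using disj(1)[of x] by (auto simp: glue_faces_Lf)
    next
      case (2 y)
      then show ?thesis
        using inj_on_image_Int[OF inj_on_inr] wf_ogp_faces_subset[OF wf_Q] disj(2)[of y]
        by (metis glue_faces_Rt image_empty)
    qed
  qed (simp add: glue_faces_outside)
  ultimately show ?thesis unfolding wf_ogp_def using glue_faces_outside by blast
qed

lemma glue_covers_Lf: "x \<in> elems P \<Longrightarrow> covers G z (Lf x) \<longleftrightarrow> (\<exists>z'. z = Lf z' \<and> covers P z' x)"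
  unfolding covers_iff_face using glue_faces_Lf by auto

lemma glue_covers_Rt: "y \<in> elems Q - S \<Longrightarrow> covers G z (Rt y) \<longleftrightarrow> (\<exists>z'. z = inr z' \<and> covers Q z' y)"
  unfolding covers_iff_face using glue_faces_Rt by auto

lemma rank_function_glue: "rank_function G glue_rank"
proof -
  have "glue_rank e = Suc (glue_rank z)" if e: "e \<in> elems G" and c: "covers G z e" for e z
    using e
  proof (cases rule: glue_elemsE)
    case (1 x)
    then obtain z' where "z = Lf z'" "covers P z' x" using glue_covers_Lf c by blast
    then show ?thesis using 1 rank_function_covers[OF wf_P rank_P] unfolding glue_rank_def by simp
  next
    case (2 y)
    then obtain z' where z': "z = inr z'" "covers Q z' y" using glue_covers_Rt c by blast
    then show ?thesis
      using 2 rank_function_covers[OF wf_Q rank_Q] inr_rank covers_elems[OF wf_Q]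
      unfolding glue_rank_def by fastforce
  qed
  moreover have "glue_rank e = 0" if e: "e \<in> elems G" and c: "\<forall>z. \<not> covers G z e" for e
    using e
  proof (cases rule: glue_elemsE)
    case (1 x)
    then show ?thesis using glue_covers_Lf c rank_P unfolding rank_function_def glue_rank_def by simp
  next
    case (2 y)
    then show ?thesis using glue_covers_Rt c rank_Q unfolding rank_function_def glue_rank_def by simp
  qed
  ultimately show ?thesis unfolding rank_function_def by blast
qed

lemma glue_rank_le_ogp_dim: "e \<in> elems G \<Longrightarrow> int (glue_rank e) \<le> ogp_dim G"
  using ogp_dim_rank[OF wf_glue rank_function_glue] by (metis empty_iff of_nat_le_iff)

end

lemma ranked_gluing_paste:
  assumes "wf_ogp P" "wf_ogp Q" "rank_function P dP" "rank_function Q dQ" "paste_ok k P Q phi"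
  shows "ranked_gluing P Q (bdm Q False (int k) (elems Q)) (bdm P True (int k) (elems P)) phi dP dQ"
  using assms face_closed_bdm unfolding ranked_gluing_def paste_ok_def by blast

lemma wf_rank_paste:
  assumes "wf_ogp P" "wf_ogp Q" "rank_function P dP" "rank_function Q dQ" "paste_ok k P Q phi"
  shows "wf_ogp (paste k P Q phi)" "\<exists>d. rank_function (paste k P Q phi) d"
proof -
  interpret ranked_gluing P Q "bdm Q False (int k) (elems Q)" "bdm P True (int k) (elems P)" phi dP dQ
    using ranked_gluing_paste[OF assms] .
  show "wf_ogp (paste k P Q phi)" "\<exists>d. rank_function (paste k P Q phi) d"
    unfolding paste_def using wf_glue rank_function_glue by blast+
qed

lemma ogp_dim_paste_ge:
  assumes "wf_ogp P" "wf_ogp Q" "rank_function P dP" "rank_function Q dQ" "paste_ok k P Q phi"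
    and "elems P \<noteq> {}" "elems Q \<noteq> {}"
  shows "ogp_dim P \<le> ogp_dim (paste k P Q phi)" "ogp_dim Q \<le> ogp_dim (paste k P Q phi)"
proof -
  interpret ranked_gluing P Q "bdm Q False (int k) (elems Q)" "bdm P True (int k) (elems P)" phi dP dQ
    using ranked_gluing_paste[OF assms(1-5)] .
  obtain x where x: "x \<in> elems P" "ogp_dim P = int (dP x)"
    using ogp_dim_rank[OF assms(1,3,6)] by blast
  then show "ogp_dim P \<le> ogp_dim (paste k P Q phi)"
    using glue_rank_le_ogp_dim[of "Lf x"] unfolding paste_def glue_elems glue_rank_def by simp
  obtain y where y: "y \<in> elems Q" "ogp_dim Q = int (dQ y)"
    using ogp_dim_rank[OF assms(2,4,7)] by blast
  moreover have "int k < ogp_dim Q" using assms(5) unfolding paste_ok_def by simp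
  ultimately have "y \<notin> bdm Q False (int k) (elems Q)"
    using bdm_rank[OF assms(2,4) subset_refl] by fastforce
  then show "ogp_dim Q \<le> ogp_dim (paste k P Q phi)"
    using y glue_rank_le_ogp_dim[of "Rt y"] unfolding paste_def glue_elems glue_rank_def by simp
qed

section \<open>Arrows\<close>

locale ranked_arrow = ranked_gluing P Q "bd_all Q" "bd_all P" phi dP dQ
  for P Q phi dP dQ +
  fixes n :: nat
  assumes dim_P: "ogp_dim P = int n" and dim_Q: "ogp_dim Q = int n"
    and rank_P_le: "\<forall>x\<in>elems P. dP x \<le> n" and rank_Q_le: "\<forall>y\<in>elems Q. dQ y \<le> n"
    and rank_P_top: "\<exists>x\<in>elems P. dP x = n"
begin

abbreviation "A \<equiv> arrow P Q phi"

definition arrow_rank :: "elt \<Rightarrow> nat" where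
  "arrow_rank e = (if e = Top then Suc n else glue_rank e)"

lemma arrow_elems: "elems A = insert Top (elems G)"
  unfolding arrow_def by simp

lemma Top_notin_glue: "Top \<notin> elems G"
  unfolding glue_elems by auto

lemma arrow_faces_glue: "e \<noteq> Top \<Longrightarrow> faces A a e = faces G a e"
  unfolding arrow_def glue_def by simp

lemma arrow_faces_Top_input: "faces A False Top = Lf ` {x \<in> elems P. dP x = n}"
  unfolding arrow_def using elem_dim_rank[OF wf_P rank_P] dim_P by auto

lemma top_rank_notin_bd_all: "y \<in> elems Q \<Longrightarrow> dQ y = n \<Longrightarrow> y \<notin> bd_all Q"
  using bdn_rank[OF wf_Q rank_Q subset_refl, of y] dim_Q unfolding bd_all_def by fastforce

lemma arrow_faces_Top_output: "faces A True Top = Rt ` {y \<in> elems Q. dQ y = n}"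
  unfolding arrow_def glue_inr_def
  using elem_dim_rank[OF wf_Q rank_Q] dim_Q top_rank_notin_bd_all by auto

lemma wf_arrow: "wf_ogp A"
proof -
  have "finite (elems A)" using arrow_elems wf_ogp_finite[OF wf_glue] by simp
  moreover have "faces A a e \<subseteq> elems A" for a e
  proof (cases "e = Top")
    case True
    then show ?thesis
      using arrow_faces_Top_input arrow_faces_Top_output top_rank_notin_bd_all
      unfolding arrow_elems glue_elems by (cases a) auto
  next
    case False
    then show ?thesis using arrow_faces_glue wf_ogp_faces_subset[OF wf_glue, of a e] arrow_elems by auto
  qed
  moreover have "faces A a e = {}" if "e \<notin> elems A" for a e
    using that arrow_faces_glue glue_faces_outside unfolding arrow_elems by simp
  moreover have "faces A True e \<inter> faces A False e = {}" for e
    using arrow_faces_Top_input arrow_faces_Top_output arrow_faces_glue wf_glue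
    unfolding wf_ogp_def by (cases "e = Top") auto
  ultimately show ?thesis unfolding wf_ogp_def by blast
qed

lemma glue_rank_le: "e \<in> elems G \<Longrightarrow> glue_rank e \<le> n"
  using rank_P_le rank_Q_le unfolding glue_elems glue_rank_def by auto

lemma rank_function_arrow: "rank_function A arrow_rank"
proof -
  have covers_Top: "covers A z Top \<longleftrightarrow> z \<in> Lf ` {x \<in> elems P. dP x = n} \<union> Rt ` {y \<in> elems Q. dQ y = n}" for z
    unfolding covers_def using arrow_faces_Top_input arrow_faces_Top_output by auto
  have covers_glue: "e \<noteq> Top \<Longrightarrow> covers A z e \<longleftrightarrow> covers G z e" for e z
    unfolding covers_def using arrow_faces_glue by simp
  have "arrow_rank e = Suc (arrow_rank z)" if e: "e \<in> elems A" and c: "covers A z e" for e z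
  proof (cases "e = Top")
    case True
    then show ?thesis using c covers_Top unfolding arrow_rank_def glue_rank_def by auto
  next
    case False
    then have "covers G z e" using c covers_glue by simp
    moreover from this have "z \<noteq> Top" using covers_elems[OF wf_glue] Top_notin_glue by metis
    ultimately show ?thesis
      using rank_function_covers[OF wf_glue rank_function_glue] False unfolding arrow_rank_def by simp
  qed
  moreover have "arrow_rank e = 0" if e: "e \<in> elems A" and c: "\<forall>z. \<not> covers A z e" for e
  proof (cases "e = Top")
    case True
    then show ?thesis using c covers_Top rank_P_top by blast
  next
    case False
    then show ?thesis
      using c covers_glue e rank_function_glue unfolding arrow_elems rank_function_def arrow_rank_def
      by simp
  qed
  ultimately show ?thesis unfolding rank_function_def by blast
qed

lemma ogp_dim_arrow: "ogp_dim A = int n + 1"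
proof -
  obtain m where m: "m \<in> elems A" "ogp_dim A = int (arrow_rank m)" "\<forall>y\<in>elems A. arrow_rank y \<le> arrow_rank m"
    using ogp_dim_rank[OF wf_arrow rank_function_arrow] arrow_elems by blast
  have "arrow_rank y \<le> Suc n" if "y \<in> elems A" for y
    using that glue_rank_le unfolding arrow_elems arrow_rank_def by (auto intro: le_SucI)
  then have "arrow_rank m = Suc n"
    using m(3) arrow_elems unfolding arrow_rank_def by (metis insertI1 le_antisym m(1))
  then show ?thesis using m(2) by simp
qed

end

lemma ranked_arrow_intro:
  assumes "wf_ogp P" "wf_ogp Q" "rank_function P dP" "rank_function Q dQ" "arrow_ok P Q phi"
    and "elems P \<noteq> {}" "elems Q \<noteq> {}"
  obtains n where "ranked_arrow P Q phi dP dQ n"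
proof -
  obtain x where x: "x \<in> elems P" "ogp_dim P = int (dP x)" "\<forall>y\<in>elems P. dP y \<le> dP x"
    using ogp_dim_rank[OF assms(1,3,6)] by blast
  obtain y where y: "y \<in> elems Q" "ogp_dim Q = int (dQ y)" "\<forall>z\<in>elems Q. dQ z \<le> dQ y"
    using ogp_dim_rank[OF assms(2,4,7)] by blast
  have "ogp_dim Q = ogp_dim P" using assms(5) unfolding arrow_ok_def by simp
  then have "dQ y = dP x" using x(2) y(2) by simp
  moreover have "ranked_gluing P Q (bd_all Q) (bd_all P) phi dP dQ"
    using assms(1-5) face_closed_bdn unfolding ranked_gluing_def arrow_ok_def bd_all_def by blast
  ultimately have "ranked_arrow P Q phi dP dQ (dP x)"
    using x y unfolding ranked_arrow_def ranked_arrow_axioms_def by auto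
  then show ?thesis using that by blast
qed

section \<open>Paths\<close>

fun vertex :: "nat \<Rightarrow> elt" where
  "vertex 0 = Pt"
| "vertex (Suc j) = Lf (vertex j)"

fun edge :: "nat \<Rightarrow> elt" where
  "edge 0 = Top"
| "edge (Suc j) = Rt (edge j)"

lemma vertex_inject [simp]: "vertex i = vertex j \<longleftrightarrow> i = j"
  by (induction i arbitrary: j; case_tac j; simp)

lemma edge_inject [simp]: "edge i = edge j \<longleftrightarrow> i = j"
  by (induction i arbitrary: j; case_tac j; simp)

lemma vertex_neq_edge [simp]: "vertex i \<noteq> edge j" "edge j \<noteq> vertex i"
  by (cases i; cases j; simp)+

declare vertex.simps [simp del] edge.simps [simp del]

lemma vertex_in_image [simp]: "vertex i \<in> vertex ` A \<longleftrightarrow> i \<in> A" "vertex i \<notin> edge ` A"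
  by auto

lemma edge_in_image [simp]: "edge i \<in> edge ` A \<longleftrightarrow> i \<in> A" "edge i \<notin> vertex ` A"
  by auto

definition path_ogp :: "nat \<Rightarrow> elt ogp" where
  "path_ogp n = \<lparr>elems = vertex ` {..n} \<union> edge ` {..<n},
     faces = (\<lambda>a x. {vertex (if a then Suc j else j) | j. j < n \<and> x = edge j})\<rparr>"

definition path_rank :: "elt \<Rightarrow> nat" where
  "path_rank x = (if x \<in> range edge then 1 else 0)"

lemma path_ogp_elems: "elems (path_ogp n) = vertex ` {..n} \<union> edge ` {..<n}"
  unfolding path_ogp_def by simp

lemma path_ogp_elemsE:
  assumes "x \<in> elems (path_ogp n)"
  obtains j where "x = vertex j" "j \<le> n" | j where "x = edge j" "j < n"
  using assms unfolding path_ogp_elems by blast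

lemma path_ogp_faces: "faces (path_ogp n) a x = {vertex (if a then Suc j else j) | j. j < n \<and> x = edge j}"
  unfolding path_ogp_def by simp

lemma path_ogp_faces_vertex [simp]: "faces (path_ogp n) a (vertex k) = {}"
  unfolding path_ogp_faces by simp

lemma path_ogp_faces_edge [simp]:
  "faces (path_ogp n) a (edge j) = (if j < n then {vertex (if a then Suc j else j)} else {})"
  unfolding path_ogp_faces by auto

lemma wf_path_ogp: "wf_ogp (path_ogp n)"
  unfolding wf_ogp_def path_ogp_elems path_ogp_faces by (auto split: if_splits)

lemma path_ogp_covers: "covers (path_ogp n) z x \<longleftrightarrow> (\<exists>j<n. x = edge j \<and> (z = vertex j \<or> z = vertex (Suc j)))"
  unfolding covers_def path_ogp_faces by auto

lemma rank_function_path_ogp: "rank_function (path_ogp n) path_rank"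
  unfolding rank_function_def path_ogp_covers path_rank_def path_ogp_elems by auto

lemma ogpos_path_ogp: "ogpos (path_ogp n)"
  using ogpos_if_rank_function[OF wf_path_ogp rank_function_path_ogp] .

lemma elem_dim_path_ogp [simp]:
  "k \<le> n \<Longrightarrow> elem_dim (path_ogp n) (vertex k) = 0"
  "j < n \<Longrightarrow> elem_dim (path_ogp n) (edge j) = 1"
  using elem_dim_rank[OF wf_path_ogp rank_function_path_ogp] unfolding path_ogp_elems path_rank_def
  by auto

lemma ogp_dim_path_ogp: "1 \<le> n \<Longrightarrow> ogp_dim (path_ogp n) = 1"
proof -
  assume n: "1 \<le> n"
  obtain x where x: "ogp_dim (path_ogp n) = int (path_rank x)" "\<forall>y\<in>elems (path_ogp n). path_rank y \<le> path_rank x"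
    using ogp_dim_rank[OF wf_path_ogp rank_function_path_ogp] unfolding path_ogp_elems by blast
  have "edge 0 \<in> elems (path_ogp n)" using n unfolding path_ogp_elems by simp
  then have "path_rank x = 1" using x(2) unfolding path_rank_def by (metis le_zero_eq rangeI zero_neq_one)
  then show ?thesis using x(1) by simp
qed

lemma path_ogp_le:
  "le (path_ogp n) x y \<longleftrightarrow> x \<in> elems (path_ogp n) \<and> y \<in> elems (path_ogp n) \<and>
     (x = y \<or> (\<exists>j<n. y = edge j \<and> (x = vertex j \<or> x = vertex (Suc j))))"
proof -
  have "(x, y) \<in> strict_less (path_ogp n) \<longleftrightarrow> covers (path_ogp n) x y"
  proof
    show "(x, y) \<in> strict_less (path_ogp n) \<Longrightarrow> covers (path_ogp n) x y"
      unfolding strict_less_def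
      by (induction rule: trancl_induct) (auto simp: path_ogp_covers)
  qed (auto simp: strict_less_def)
  then show ?thesis unfolding le_def path_ogp_covers by blast
qed

lemma cl_path_ogp_vertex: "k \<le> n \<Longrightarrow> cl (path_ogp n) {vertex k} = {vertex k}"
  unfolding cl_def path_ogp_le by (auto simp: path_ogp_elems)

lemma cl_path_ogp_edge: "j < n \<Longrightarrow> cl (path_ogp n) {edge j} = {edge j, vertex j, vertex (Suc j)}"
  unfolding cl_def path_ogp_le by (auto simp: path_ogp_elems)

lemma cofaces_path_ogp_vertex:
  "cofaces (path_ogp n) b (vertex k) = {edge j | j. j < n \<and> k = (if b then Suc j else j)}"
  unfolding cofaces_def path_ogp_faces path_ogp_elems by auto

lemma bdm_path_ogp_vertex: "k \<le> n \<Longrightarrow> bdm (path_ogp n) a 0 {vertex k} = {vertex k}"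
proof -
  assume k: "k \<le> n"
  have "Delta_n (path_ogp n) a 0 {vertex k} = {vertex k}"
    unfolding Delta_n_def using k by (auto simp: cofaces_path_ogp_vertex)
  then show ?thesis unfolding bdm_def using cl_path_ogp_vertex[OF k] by simp
qed

lemma bdm_path_ogp_edge:
  "j < n \<Longrightarrow> bdm (path_ogp n) a 0 {edge j, vertex j, vertex (Suc j)} = {vertex (if a then Suc j else j)}"
proof -
  assume j: "j < n"
  have "Delta_n (path_ogp n) a 0 {edge j, vertex j, vertex (Suc j)} = {vertex (if a then Suc j else j)}"
    unfolding Delta_n_def using j by (cases a) (auto simp: cofaces_path_ogp_vertex)
  then show ?thesis unfolding bdm_def using cl_path_ogp_vertex j by auto
qed

lemma path_ogp_no_cofaces_iff:
  "1 \<le> n \<Longrightarrow> k \<le> n \<Longrightarrow>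
    cofaces (path_ogp n) (\<not> a) (vertex k) \<inter> elems (path_ogp n) = {} \<longleftrightarrow> k = (if a then n else 0)"
  unfolding cofaces_path_ogp_vertex path_ogp_elems by (cases a; cases k) (auto simp: less_Suc_eq_le)

lemma bdm_path_ogp: "1 \<le> n \<Longrightarrow> bdm (path_ogp n) a 0 (elems (path_ogp n)) = {vertex (if a then n else 0)}"
proof -
  assume n: "1 \<le> n"
  have "Delta_n (path_ogp n) a 0 (elems (path_ogp n)) = {vertex (if a then n else 0)}"
  proof (intro equalityI subsetI)
    fix x
    assume x: "x \<in> Delta_n (path_ogp n) a 0 (elems (path_ogp n))"
    then have "x \<in> elems (path_ogp n)" unfolding Delta_n_def by simp
    then show "x \<in> {vertex (if a then n else 0)}"
      using x path_ogp_no_cofaces_iff[OF n] unfolding Delta_n_def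
      by (cases rule: path_ogp_elemsE) auto
  next
    fix x
    assume "x \<in> {vertex (if a then n else 0)}"
    then show "x \<in> Delta_n (path_ogp n) a 0 (elems (path_ogp n))"
      using path_ogp_no_cofaces_iff[OF n] unfolding Delta_n_def path_ogp_elems by auto
  qed
  then show ?thesis unfolding bdm_def using cl_path_ogp_vertex n by auto
qed

lemma bdm_iso_path_ogp:
  assumes "wf_ogp Q" "iso g (path_ogp n) Q" "1 \<le> n"
  shows "bdm Q a 0 (elems Q) = {g (vertex (if a then n else 0))}"
  using iso_bdm[OF wf_path_ogp assms(1) rank_function_path_ogp assms(2) subset_refl, of a 0]
    bdm_path_ogp[OF assms(3), of a] iso_elems[OF assms(2)] by simp

lemma faces_iso_path_ogp_vertex:
  assumes "iso g (path_ogp n) Q" "j \<le> n"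
  shows "faces Q a (g (vertex j)) = {}"
  using iso_faces[OF assms(1), of "vertex j" a] assms(2) unfolding path_ogp_elems by simp

lemma ogp_dim_iso_path_ogp: "wf_ogp Q \<Longrightarrow> iso g (path_ogp n) Q \<Longrightarrow> 1 \<le> n \<Longrightarrow> ogp_dim Q = 1"
  using iso_ogp_dim[OF wf_path_ogp _ rank_function_path_ogp] ogp_dim_path_ogp by metis

lemma paste_ok_paths:
  assumes "wf_ogp P" "wf_ogp Q" "iso f (path_ogp m) P" "iso g (path_ogp n) Q" "1 \<le> m" "1 \<le> n"
  shows "paste_ok 0 P Q (\<lambda>_. f (vertex m))"
proof -
  have "iso (\<lambda>_. f (vertex m)) (restrict_ogp Q {g (vertex 0)}) (restrict_ogp P {f (vertex m)})"
    unfolding iso_def bij_betw_def restrict_ogp_def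
    using faces_iso_path_ogp_vertex[OF assms(3)] faces_iso_path_ogp_vertex[OF assms(4)] by auto
  then show ?thesis
    unfolding paste_ok_def
    using bdm_iso_path_ogp[OF assms(1,3,5), of True] bdm_iso_path_ogp[OF assms(2,4,6), of False]
      ogp_dim_iso_path_ogp[OF assms(1,3,5)] ogp_dim_iso_path_ogp[OF assms(2,4,6)] by simp
qed

definition path_unshift :: "nat \<Rightarrow> elt \<Rightarrow> elt" where
  "path_unshift m x =
    (if x \<in> range vertex then vertex (inv vertex x - m) else edge (inv edge x - m))"

lemma path_unshift_vertex [simp]: "path_unshift m (vertex j) = vertex (j - m)"
  unfolding path_unshift_def by (simp add: inj_def)

lemma path_unshift_edge [simp]: "path_unshift m (edge j) = edge (j - m)"
  unfolding path_unshift_def by (auto simp: inj_def)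

definition path_join :: "nat \<Rightarrow> (elt \<Rightarrow> elt) \<Rightarrow> (elt \<Rightarrow> elt) \<Rightarrow> elt \<Rightarrow> elt" where
  "path_join m f g x = (if x \<in> elems (path_ogp m) then Lf (f x) else Rt (g (path_unshift m x)))"

lemma path_join_vertex:
  "path_join m f g (vertex j) = (if j \<le> m then Lf (f (vertex j)) else Rt (g (vertex (j - m))))"
  unfolding path_join_def path_ogp_elems by auto

lemma path_join_edge:
  "path_join m f g (edge j) = (if j < m then Lf (f (edge j)) else Rt (g (edge (j - m))))"
  unfolding path_join_def path_ogp_elems by auto

lemma path_ogp_elems_mono: "elems (path_ogp m) \<subseteq> elems (path_ogp (m + n))"
  unfolding path_ogp_elems by auto

lemma path_ogp_faces_mono: "x \<in> elems (path_ogp m) \<Longrightarrow> faces (path_ogp (m + n)) a x = faces (path_ogp m) a x"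
  unfolding path_ogp_elems by auto

lemma bij_betw_path_unshift:
  "bij_betw (path_unshift m) (elems (path_ogp (m + n)) - elems (path_ogp m)) (elems (path_ogp n) - {vertex 0})"
proof -
  have "elems (path_ogp (m + n)) - elems (path_ogp m) = vertex ` {m<..m + n} \<union> edge ` {m..<m + n}"
    unfolding path_ogp_elems by auto
  moreover have "elems (path_ogp n) - {vertex 0} = vertex ` {0<..n} \<union> edge ` {..<n}"
    unfolding path_ogp_elems by auto
  moreover have "path_unshift m ` vertex ` {m<..m + n} = vertex ` {0<..n}"
    by (auto simp: image_image image_iff intro!: bexI[where x = "_ + m"])
  moreover have "path_unshift m ` edge ` {m..<m + n} = edge ` {..<n}"
    by (auto simp: image_image image_iff intro!: bexI[where x = "_ + m"])
  ultimately show ?thesis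
    unfolding bij_betw_def inj_on_def by (auto simp: image_Un)
qed

lemma path_unshift_faces:
  assumes "x \<in> elems (path_ogp (m + n)) - elems (path_ogp m)"
  shows "path_unshift m ` faces (path_ogp (m + n)) a x = faces (path_ogp n) a (path_unshift m x)"
  using DiffD1[OF assms] by (cases rule: path_ogp_elemsE) (use assms in \<open>auto simp: path_ogp_elems Suc_diff_le\<close>)

lemma path_ogp_faces_after:
  assumes "x \<in> elems (path_ogp (m + n)) - elems (path_ogp m)"
  shows "faces (path_ogp (m + n)) a x \<subseteq> insert (vertex m) (elems (path_ogp (m + n)) - elems (path_ogp m))"
  using DiffD1[OF assms] by (cases rule: path_ogp_elemsE) (use assms in \<open>auto simp: path_ogp_elems\<close>)

locale path_pasting =
  fixes P Q :: "elt ogp" and f g phi :: "elt \<Rightarrow> elt" and m n :: nat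
  assumes wf_P: "wf_ogp P" and wf_Q: "wf_ogp Q"
    and iso_f: "iso f (path_ogp m) P" and iso_g: "iso g (path_ogp n) Q"
    and m: "1 \<le> m" and n: "1 \<le> n" and ok: "paste_ok 0 P Q phi"
begin

abbreviation "h \<equiv> path_join m f g"

lemma gluing: "ranked_gluing P Q {g (vertex 0)} {f (vertex m)} phi
    (path_rank \<circ> inv_into (elems (path_ogp m)) f) (path_rank \<circ> inv_into (elems (path_ogp n)) g)"
  using ranked_gluing_paste[OF wf_P wf_Q rank_function_iso[OF wf_path_ogp rank_function_path_ogp iso_f]
      rank_function_iso[OF wf_path_ogp rank_function_path_ogp iso_g] ok]
    bdm_iso_path_ogp[OF wf_Q iso_g n, of False] bdm_iso_path_ogp[OF wf_P iso_f m, of True] by simp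

interpretation ranked_gluing P Q "{g (vertex 0)}" "{f (vertex m)}" phi
  "path_rank \<circ> inv_into (elems (path_ogp m)) f" "path_rank \<circ> inv_into (elems (path_ogp n)) g"
  using gluing .

lemma paste_eq_glue: "paste 0 P Q phi = G"
  unfolding paste_def using bdm_iso_path_ogp[OF wf_Q iso_g n, of False] by simp

lemma phi_joint: "phi (g (vertex 0)) = f (vertex m)"
  using iso_in[OF iso_phi] by simp

lemma g_vertex_0_iff: "z \<in> elems (path_ogp n) \<Longrightarrow> g z = g (vertex 0) \<longleftrightarrow> z = vertex 0"
  using iso_inj[OF iso_g] unfolding path_ogp_elems by auto

lemma path_join_inr:
  assumes "x \<in> insert (vertex m) (elems (path_ogp (m + n)) - elems (path_ogp m))"
  shows "h x = inr (g (path_unshift m x))"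
  using assms bij_betw_apply[OF bij_betw_path_unshift] g_vertex_0_iff phi_joint
  unfolding path_join_def glue_inr_def by (auto simp: path_ogp_elems)

lemma path_join_image: "h ` elems (path_ogp (m + n)) = elems G"
proof -
  let ?R = "elems (path_ogp (m + n)) - elems (path_ogp m)"
  have "h ` elems (path_ogp m) = Lf ` elems P"
    unfolding iso_elems[OF iso_f] path_join_def by (auto simp: image_image)
  moreover have "h ` ?R = Rt ` g ` path_unshift m ` ?R"
    unfolding path_join_def by (auto simp: image_image)
  moreover have "g ` path_unshift m ` ?R = elems Q - {g (vertex 0)}"
    using bij_betw_imp_surj_on[OF bij_betw_path_unshift] iso_elems[OF iso_g] g_vertex_0_iff by auto
  moreover have "elems (path_ogp (m + n)) = elems (path_ogp m) \<union> ?R"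
    using path_ogp_elems_mono by blast
  ultimately show ?thesis unfolding glue_elems by (metis image_Un)
qed

lemma inj_on_path_join: "inj_on h (elems (path_ogp (m + n)))"
proof -
  let ?R = "elems (path_ogp (m + n)) - elems (path_ogp m)"
  have "inj_on h (elems (path_ogp m))"
    unfolding path_join_def inj_on_def using iso_inj[OF iso_f] by auto
  moreover have "inj_on h ?R"
  proof (rule inj_onI)
    fix x y
    assume xy: "x \<in> ?R" "y \<in> ?R" "h x = h y"
    have "path_unshift m x \<in> elems (path_ogp n)" "path_unshift m y \<in> elems (path_ogp n)"
      using bij_betw_apply[OF bij_betw_path_unshift] xy(1,2) by auto
    then have "path_unshift m x = path_unshift m y"
      using xy iso_inj[OF iso_g] unfolding path_join_def by auto
    then show "x = y" using bij_betw_imp_inj_on[OF bij_betw_path_unshift] xy(1,2) by (meson inj_onD)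
  qed
  moreover have "h ` elems (path_ogp m) \<inter> h ` ?R = {}"
    unfolding path_join_def by auto
  ultimately have "inj_on h (elems (path_ogp m) \<union> ?R)"
    unfolding inj_on_Un by blast
  then show ?thesis by (simp add: Un_absorb1 path_ogp_elems_mono)
qed

lemma path_join_faces:
  assumes x: "x \<in> elems (path_ogp (m + n))"
  shows "h ` faces (path_ogp (m + n)) a x = faces G a (h x)"
proof (cases "x \<in> elems (path_ogp m)")
  case True
  have "faces G a (h x) = Lf ` f ` faces (path_ogp m) a x"
    using glue_faces_Lf[OF iso_in[OF iso_f True]] iso_faces[OF iso_f True] True
    unfolding path_join_def by simp
  also have "\<dots> = h ` faces (path_ogp m) a x"
    using wf_ogp_faces_subset[OF wf_path_ogp] unfolding path_join_def by (force simp: image_image)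
  finally show ?thesis using path_ogp_faces_mono[OF True] by simp
next
  case False
  let ?y = "path_unshift m x"
  have y: "?y \<in> elems (path_ogp n)" "?y \<noteq> vertex 0"
    using bij_betw_apply[OF bij_betw_path_unshift] x False by auto
  have "h ` faces (path_ogp (m + n)) a x = inr ` g ` path_unshift m ` faces (path_ogp (m + n)) a x"
    using path_join_inr path_ogp_faces_after[of x] x False by (auto simp: image_image subset_iff)
  also have "\<dots> = inr ` faces Q a (g ?y)"
    using path_unshift_faces[of x] iso_faces[OF iso_g y(1)] x False by simp
  also have "\<dots> = faces G a (h x)"
    using glue_faces_Rt[of "g ?y"] iso_in[OF iso_g y(1)] g_vertex_0_iff y False
    unfolding path_join_def by simp
  finally show ?thesis .
qed

lemma iso_path_join: "iso h (path_ogp (m + n)) (paste 0 P Q phi)"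
  unfolding iso_def bij_betw_def paste_eq_glue
  using inj_on_path_join path_join_image path_join_faces by blast

end

section \<open>Regular molecules of dimension at most one\<close>

lemma singleton_faces_empty:
  assumes "wf_ogp P" "rank_function P d" "elems P = {p}"
  shows "faces P a p = {}"
proof (rule ccontr)
  assume "faces P a p \<noteq> {}"
  then obtain z where z: "z \<in> faces P a p" by blast
  then have "z = p" using wf_ogp_faces_subset[OF assms(1)] assms(3) by blast
  moreover have "covers P z p" using z covers_iff_face by metis
  ultimately show False using rank_function_covers[OF assms(1,2)] by fastforce
qed

definition segment_map :: "elt \<Rightarrow> elt \<Rightarrow> elt \<Rightarrow> elt" where
  "segment_map p q x = (if x = vertex 0 then Lf p else if x = vertex 1 then Rt q else Top)"

lemma path_ogp_1_elems: "elems (path_ogp 1) = {vertex 0, vertex 1, edge 0}"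
  unfolding path_ogp_elems by (auto simp: le_Suc_eq)

lemma (in ranked_arrow) iso_segment_map:
  assumes P: "elems P = {p}" and Q: "elems Q = {q}"
  shows "iso (segment_map p q) (path_ogp 1) A"
proof -
  let ?k = "segment_map p q"
  have faces_P: "faces P a p = {}" and faces_Q: "faces Q a q = {}" for a
    using singleton_faces_empty[OF wf_P rank_P P] singleton_faces_empty[OF wf_Q rank_Q Q] by blast+
  then have "dP p = 0" using rank_P P unfolding rank_function_def covers_iff_face by simp
  then have n: "n = 0" using rank_P_top P by auto
  have "bd_all Q = {}" unfolding bd_all_def bdn_def bdm_def using dim_Q n by simp
  then have elems_A: "elems A = {Top, Lf p, Rt q}"
    unfolding arrow_elems glue_elems using P Q by auto
  have k: "?k (vertex 0) = Lf p" "?k (vertex 1) = Rt q" "?k (edge 0) = Top"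
    unfolding segment_map_def by simp_all
  have "faces A a (Lf p) = {}" "faces A a (Rt q) = {}" for a
    using arrow_faces_glue glue_faces_Lf glue_faces_Rt \<open>bd_all Q = {}\<close> P Q faces_P faces_Q
    by auto
  moreover have "faces A False Top = {Lf p}" "faces A True Top = {Rt q}"
    using arrow_faces_Top_input arrow_faces_Top_output rank_P_top rank_Q_le P Q n by auto
  ultimately have "?k ` faces (path_ogp 1) a x = faces A a (?k x)" if "x \<in> elems (path_ogp 1)" for a x
    using that k unfolding path_ogp_1_elems by (cases a) auto
  moreover have "bij_betw ?k (elems (path_ogp 1)) (elems A)"
    unfolding bij_betw_def path_ogp_1_elems elems_A using k by (auto simp: insert_commute)
  ultimately show ?thesis unfolding iso_def by blast
qed

lemma wf_point_ogp: "wf_ogp point_ogp"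
  unfolding wf_ogp_def point_ogp_def by simp

lemma rank_function_point_ogp: "rank_function point_ogp (\<lambda>_. 0)"
  unfolding rank_function_def covers_def point_ogp_def by simp

lemma point_ogp_elems: "elems point_ogp = {Pt}"
  unfolding point_ogp_def by simp

lemma ogp_dim_point_ogp: "ogp_dim point_ogp = 0"
  using ogp_dim_rank[OF wf_point_ogp rank_function_point_ogp] point_ogp_elems by fastforce

text \<open>The invariant of the induction over \<^const>\<open>regmolE\<close>.  The rank function is what makes
  the dimensions of pastings and arrows computable.\<close>

definition low_dim_shape :: "elt ogp \<Rightarrow> bool" where
  "low_dim_shape P \<longleftrightarrow> wf_ogp P \<and> elems P \<noteq> {} \<and> (\<exists>d. rank_function P d) \<and>
     (ogp_dim P = 0 \<longrightarrow> (\<exists>p. elems P = {p})) \<and>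
     (ogp_dim P = 1 \<longrightarrow> (\<exists>n f. 1 \<le> n \<and> iso f (path_ogp n) P))"

lemma low_dim_shape_point: "low_dim_shape point_ogp"
  unfolding low_dim_shape_def
  using wf_point_ogp rank_function_point_ogp point_ogp_elems ogp_dim_point_ogp by auto

lemma low_dim_shape_iso:
  assumes "low_dim_shape P" "ogpos Q" "iso f P Q"
  shows "low_dim_shape Q"
proof -
  obtain d where wf_P: "wf_ogp P" and rank: "rank_function P d" and ne: "elems P \<noteq> {}"
    using assms(1) unfolding low_dim_shape_def by blast
  have wf_Q: "wf_ogp Q" using ogpos_imp_wf_ogp[OF assms(2)] .
  have dim: "ogp_dim Q = ogp_dim P" using iso_ogp_dim[OF wf_P wf_Q rank assms(3)] .
  have "\<exists>q. elems Q = {q}" if "ogp_dim Q = 0"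
    using assms(1) dim that iso_elems[OF assms(3)] unfolding low_dim_shape_def by auto
  moreover have "\<exists>n g. 1 \<le> n \<and> iso g (path_ogp n) Q" if "ogp_dim Q = 1"
    using assms(1) dim that iso_comp[OF _ assms(3)] unfolding low_dim_shape_def by auto
  ultimately show ?thesis
    using wf_Q rank_function_iso[OF wf_P rank assms(3)] ne iso_elems[OF assms(3)]
    unfolding low_dim_shape_def by blast
qed

lemma low_dim_shape_paste:
  assumes "low_dim_shape P" "low_dim_shape Q" "paste_ok k P Q phi"
  shows "low_dim_shape (paste k P Q phi)"
proof -
  obtain dP dQ where wf: "wf_ogp P" "wf_ogp Q" and rank: "rank_function P dP" "rank_function Q dQ"
    and ne: "elems P \<noteq> {}" "elems Q \<noteq> {}"
    using assms(1,2) unfolding low_dim_shape_def by blast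
  note dim_ge = ogp_dim_paste_ge[OF wf rank assms(3) ne]
  have k: "int k < ogp_dim P" "int k < ogp_dim Q" using assms(3) unfolding paste_ok_def by auto
  have "\<exists>n f. 1 \<le> n \<and> iso f (path_ogp n) (paste k P Q phi)" if "ogp_dim (paste k P Q phi) = 1"
  proof -
    have "ogp_dim P = 1" "ogp_dim Q = 1" "k = 0" using dim_ge k that by linarith+
    then obtain m f n g where "1 \<le> m" "iso f (path_ogp m) P" "1 \<le> n" "iso g (path_ogp n) Q"
      using assms(1,2) unfolding low_dim_shape_def by metis
    then have "path_pasting P Q f g phi m n"
      using wf assms(3) \<open>k = 0\<close> unfolding path_pasting_def by simp
    then show ?thesis using path_pasting.iso_path_join \<open>k = 0\<close> \<open>1 \<le> m\<close> by (metis trans_le_add1)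
  qed
  moreover have "ogp_dim (paste k P Q phi) \<noteq> 0" using dim_ge k by linarith
  moreover have "elems (paste k P Q phi) \<noteq> {}" using ne unfolding paste_def glue_def by simp
  ultimately show ?thesis unfolding low_dim_shape_def using wf_rank_paste[OF wf rank assms(3)] by blast
qed

lemma low_dim_shape_arrow:
  assumes "low_dim_shape P" "low_dim_shape Q" "arrow_ok P Q phi"
  shows "low_dim_shape (arrow P Q phi)"
proof -
  obtain dP dQ where wf: "wf_ogp P" "wf_ogp Q" and rank: "rank_function P dP" "rank_function Q dQ"
    and ne: "elems P \<noteq> {}" "elems Q \<noteq> {}"
    using assms(1,2) unfolding low_dim_shape_def by blast
  obtain n where arr: "ranked_arrow P Q phi dP dQ n"
    using ranked_arrow_intro[OF wf rank assms(3) ne] by blast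
  have dim_A: "ogp_dim (arrow P Q phi) = int n + 1" using ranked_arrow.ogp_dim_arrow[OF arr] .
  have "\<exists>k f. 1 \<le> k \<and> iso f (path_ogp k) (arrow P Q phi)" if "ogp_dim (arrow P Q phi) = 1"
  proof -
    have "ogp_dim P = 0" "ogp_dim Q = 0"
      using ranked_arrow.dim_P[OF arr] ranked_arrow.dim_Q[OF arr] dim_A that by auto
    then obtain p q where "elems P = {p}" "elems Q = {q}"
      using assms(1,2) unfolding low_dim_shape_def by metis
    then show ?thesis using ranked_arrow.iso_segment_map[OF arr] by blast
  qed
  moreover have "elems (arrow P Q phi) \<noteq> {}" unfolding arrow_def by simp
  ultimately show ?thesis
    unfolding low_dim_shape_def
    using ranked_arrow.wf_arrow[OF arr] ranked_arrow.rank_function_arrow[OF arr] dim_A by auto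
qed

lemma regmolE_low_dim_shape: "regmolE P \<Longrightarrow> low_dim_shape P"
  by (induction rule: regmolE.induct)
     (auto intro: low_dim_shape_point low_dim_shape_iso low_dim_shape_paste low_dim_shape_arrow)

lemma regular_molecule_dim_1_path:
  assumes "regular_molecule V" "ogp_dim V = 1"
  obtains m \<alpha> where "1 \<le> m" "iso \<alpha> (path_ogp m) V"
proof -
  obtain P f where P: "regmolE P" "iso f P V" and V: "ogpos V"
    using assms(1) unfolding regular_molecule_def by blast
  obtain d where wf: "wf_ogp P" and rank: "rank_function P d"
    using regmolE_low_dim_shape[OF P(1)] unfolding low_dim_shape_def by blast
  have "ogp_dim P = 1" using iso_ogp_dim[OF wf ogpos_imp_wf_ogp[OF V] rank P(2)] assms(2) by simp
  then obtain m g where "1 \<le> m" "iso g (path_ogp m) P"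
    using regmolE_low_dim_shape[OF P(1)] unfolding low_dim_shape_def by blast
  then show ?thesis using that iso_comp[OF _ P(2)] by blast
qed

section \<open>Shifted paths are submolecules\<close>

lemma regmolE_iso_path_ogp: "regmolE X \<Longrightarrow> iso h (path_ogp k) X \<Longrightarrow> regmolE (path_ogp k)"
  using regmolE.iso[OF _ ogpos_path_ogp iso_inv[OF wf_path_ogp]] by blast

lemma regmolE_path_ogp_1: "regmolE (path_ogp 1)"
proof -
  have ok: "arrow_ok point_ogp point_ogp id"
    unfolding arrow_ok_def round_def bdn_def bdm_def using iso_id ogp_dim_point_ogp by simp
  obtain n where "ranked_arrow point_ogp point_ogp id (\<lambda>_. 0) (\<lambda>_. 0) n"
    using ranked_arrow_intro[OF wf_point_ogp wf_point_ogp rank_function_point_ogp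
        rank_function_point_ogp ok] point_ogp_elems by blast
  then have "iso (segment_map Pt Pt) (path_ogp 1) (arrow point_ogp point_ogp id)"
    using ranked_arrow.iso_segment_map point_ogp_elems by blast
  then show ?thesis
    using regmolE_iso_path_ogp regmolE.arrow[OF regmolE.point regmolE.point ok] by blast
qed

lemma path_pasting_path_ogp:
  "1 \<le> m \<Longrightarrow> 1 \<le> n \<Longrightarrow> path_pasting (path_ogp m) (path_ogp n) id id (\<lambda>_. vertex m) m n"
  unfolding path_pasting_def using paste_ok_paths[OF wf_path_ogp wf_path_ogp iso_id iso_id]
  by (simp add: wf_path_ogp iso_id)

lemma regmolE_path_ogp: "1 \<le> n \<Longrightarrow> regmolE (path_ogp n)"
proof (induction n rule: dec_induct)
  case base
  then show ?case using regmolE_path_ogp_1 by simp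
next
  case (step n)
  have "path_pasting (path_ogp n) (path_ogp 1) id id (\<lambda>_. vertex n) n 1"
    using path_pasting_path_ogp step.hyps(1) by simp
  then show ?case
    using regmolE.paste[OF step.IH regmolE_path_ogp_1] path_pasting.ok
      path_pasting.iso_path_join regmolE_iso_path_ogp by fastforce
qed

definition path_shift :: "nat \<Rightarrow> elt \<Rightarrow> elt" where
  "path_shift s x = (if x \<in> range vertex then vertex (s + inv vertex x) else edge (s + inv edge x))"

lemma path_shift_vertex [simp]: "path_shift s (vertex j) = vertex (s + j)"
  unfolding path_shift_def by (simp add: inj_def)

lemma path_shift_edge [simp]: "path_shift s (edge j) = edge (s + j)"
  unfolding path_shift_def by (auto simp: inj_def)

lemma path_shift_in: "x \<in> elems (path_ogp m) \<Longrightarrow> s + m \<le> n \<Longrightarrow> path_shift s x \<in> elems (path_ogp n)"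
  by (cases rule: path_ogp_elemsE) (auto simp: path_ogp_elems)

lemma path_shift_0: "x \<in> elems (path_ogp m) \<Longrightarrow> path_shift 0 x = x"
  by (cases rule: path_ogp_elemsE) auto

lemma subincE_path_shift_left:
  assumes m: "1 \<le> m"
  obtains Y H g where "regmolE Y" "wf_ogp Y" "subincE g (path_ogp m) Y" "iso H (path_ogp (s + m)) Y"
    "\<forall>x\<in>elems (path_ogp m). H (path_shift s x) = g x"
proof (cases "s = 0")
  case True
  show ?thesis
  proof (rule that)
    show "regmolE (path_ogp m)" "wf_ogp (path_ogp m)"
      using regmolE_path_ogp[OF m] wf_path_ogp by simp_all
    show "subincE id (path_ogp m) (path_ogp m)"
      using subincE.iso[OF regmolE_path_ogp[OF m] regmolE_path_ogp[OF m] iso_id] .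
    show "iso id (path_ogp (s + m)) (path_ogp m)" using True iso_id by simp
    show "\<forall>x\<in>elems (path_ogp m). id (path_shift s x) = id x" using True path_shift_0 by simp
  qed
next
  case False
  then have pp: "path_pasting (path_ogp s) (path_ogp m) id id (\<lambda>_. vertex s) s m"
    using path_pasting_path_ogp m by simp
  note ok = path_pasting.ok[OF pp]
  show ?thesis
  proof (rule that)
    show "regmolE (paste 0 (path_ogp s) (path_ogp m) (\<lambda>_. vertex s))"
      using regmolE.paste[OF regmolE_path_ogp regmolE_path_ogp[OF m] ok] False by simp
    show "wf_ogp (paste 0 (path_ogp s) (path_ogp m) (\<lambda>_. vertex s))"
      using wf_rank_paste(1)[OF wf_path_ogp wf_path_ogp rank_function_path_ogp rank_function_path_ogp ok] .
    show "subincE (paste_inr 0 (path_ogp m) (\<lambda>_. vertex s)) (path_ogp m)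
        (paste 0 (path_ogp s) (path_ogp m) (\<lambda>_. vertex s))"
      using subincE.inr[OF regmolE_path_ogp regmolE_path_ogp[OF m] ok] False by simp
    show "iso (path_join s id id) (path_ogp (s + m)) (paste 0 (path_ogp s) (path_ogp m) (\<lambda>_. vertex s))"
      using path_pasting.iso_path_join[OF pp] .
    have "bdm (path_ogp m) False 0 (elems (path_ogp m)) = {vertex 0}"
      using bdm_path_ogp[OF m] by simp
    then show "\<forall>x\<in>elems (path_ogp m). path_join s id id (path_shift s x) = paste_inr 0 (path_ogp m) (\<lambda>_. vertex s) x"
      unfolding paste_inr_def glue_inr_def
      by (intro ballI, elim path_ogp_elemsE) (auto simp: path_join_vertex path_join_edge)
  qed
qed

lemma subincE_path_extend_right:
  assumes Y: "regmolE Y" "wf_ogp Y" "iso H (path_ogp t) Y" and t: "1 \<le> t"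
  obtains X H' g where "regmolE X" "subincE g Y X" "iso H' (path_ogp (t + r)) X"
    "\<forall>x\<in>elems (path_ogp t). H' x = g (H x)"
proof (cases "r = 0")
  case True
  show ?thesis
  proof (rule that)
    show "regmolE Y" "subincE id Y Y" using Y(1) subincE.iso[OF Y(1,1) iso_id] by simp_all
    show "iso H (path_ogp (t + r)) Y" using True Y(3) by simp
  qed simp
next
  case False
  then have pp: "path_pasting Y (path_ogp r) H id (\<lambda>_. H (vertex t)) t r"
    unfolding path_pasting_def
    using Y t paste_ok_paths[OF Y(2) wf_path_ogp Y(3) iso_id] wf_path_ogp iso_id by simp
  note ok = path_pasting.ok[OF pp]
  show ?thesis
  proof (rule that)
    show "regmolE (paste 0 Y (path_ogp r) (\<lambda>_. H (vertex t)))"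
      using regmolE.paste[OF Y(1) regmolE_path_ogp ok] False by simp
    show "subincE Lf Y (paste 0 Y (path_ogp r) (\<lambda>_. H (vertex t)))"
      using subincE.inl[OF Y(1) regmolE_path_ogp ok] False by simp
    show "iso (path_join t H id) (path_ogp (t + r)) (paste 0 Y (path_ogp r) (\<lambda>_. H (vertex t)))"
      using path_pasting.iso_path_join[OF pp] .
    show "\<forall>x\<in>elems (path_ogp t). path_join t H id x = Lf (H x)"
      unfolding path_join_def by simp
  qed
qed

lemma subincE_path_shift:
  assumes m: "1 \<le> m" and n: "s + m \<le> n"
  obtains X H g where "regmolE X" "subincE g (path_ogp m) X" "iso H (path_ogp n) X"
    "\<forall>x\<in>elems (path_ogp m). H (path_shift s x) = g x"
proof -
  obtain Y H1 g1 where Y: "regmolE Y" "wf_ogp Y" "subincE g1 (path_ogp m) Y"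
    "iso H1 (path_ogp (s + m)) Y" "\<forall>x\<in>elems (path_ogp m). H1 (path_shift s x) = g1 x"
    by (rule subincE_path_shift_left[OF m])
  have "1 \<le> s + m" using m by simp
  then obtain X H g2 where X: "regmolE X" "subincE g2 Y X" "iso H (path_ogp (s + m + (n - (s + m)))) X"
    "\<forall>x\<in>elems (path_ogp (s + m)). H x = g2 (H1 x)"
    by (rule subincE_path_extend_right[OF Y(1,2,4)])
  show ?thesis
  proof (rule that)
    show "regmolE X" "iso H (path_ogp n) X" using X(1,3) n by simp_all
    show "subincE (g2 \<circ> g1) (path_ogp m) X" using subincE.comp[OF Y(3) X(2)] .
    show "\<forall>x\<in>elems (path_ogp m). H (path_shift s x) = (g2 \<circ> g1) x"
    proof
      fix x
      assume x: "x \<in> elems (path_ogp m)"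
      then have "H (path_shift s x) = g2 (H1 (path_shift s x))"
        using X(4) path_shift_in[of x m s "s + m"] by simp
      then show "H (path_shift s x) = (g2 \<circ> g1) x" using Y(5) x by simp
    qed
  qed
qed

section \<open>Inclusions of paths\<close>

lemma bdm_cl_iso_path_ogp:
  assumes "wf_ogp V" "iso \<alpha> (path_ogp m) V" "z \<in> elems (path_ogp m)"
  shows "bdm V b 0 (cl V {\<alpha> z}) = \<alpha> ` bdm (path_ogp m) b 0 (cl (path_ogp m) {z})"
  using iso_cl[OF wf_path_ogp assms(1,2), of "{z}"] assms(3)
    iso_bdm[OF wf_path_ogp assms(1) rank_function_path_ogp assms(2) cl_subset] by simp

lemma bdm_cl_iso_path_ogp_vertex:
  assumes "wf_ogp V" "iso \<alpha> (path_ogp m) V" "j \<le> m"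
  shows "bdm V b 0 (cl V {\<alpha> (vertex j)}) = {\<alpha> (vertex j)}"
  using bdm_cl_iso_path_ogp[OF assms(1,2)] cl_path_ogp_vertex[OF assms(3)]
    bdm_path_ogp_vertex[OF assms(3)] assms(3) by (simp add: path_ogp_elems)

lemma bdm_cl_iso_path_ogp_edge:
  assumes "wf_ogp V" "iso \<alpha> (path_ogp m) V" "j < m"
  shows "bdm V b 0 (cl V {\<alpha> (edge j)}) = {\<alpha> (vertex (if b then Suc j else j))}"
  using bdm_cl_iso_path_ogp[OF assms(1,2)] cl_path_ogp_edge[OF assms(3)]
    bdm_path_ogp_edge[OF assms(3)] assms(3) by (simp add: path_ogp_elems)

locale path_inclusion =
  fixes V :: "'a ogp" and U :: "'b ogp" and i :: "'a \<Rightarrow> 'b"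
    and \<alpha> :: "elt \<Rightarrow> 'a" and \<beta> :: "elt \<Rightarrow> 'b" and m n :: nat
  assumes wf_V: "wf_ogp V" and wf_U: "wf_ogp U"
    and iso_\<alpha>: "iso \<alpha> (path_ogp m) V" and iso_\<beta>: "iso \<beta> (path_ogp n) U"
    and incl: "inclusion i V U" and m: "1 \<le> m"
begin

lemma i_bdm_cl: "x \<in> elems V \<Longrightarrow> i ` bdm V b 0 (cl V {x}) = bdm U b 0 (cl U {i x})"
  using incl unfolding inclusion_def is_map_def by blast

lemma \<beta>_vertex_inject: "k \<le> n \<Longrightarrow> l \<le> n \<Longrightarrow> \<beta> (vertex k) = \<beta> (vertex l) \<longleftrightarrow> k = l"
  using iso_inj[OF iso_\<beta>, of "vertex k" "vertex l"] by (simp add: path_ogp_elems)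

text \<open>An edge cannot be sent to a vertex, since its two endpoints have distinct images.\<close>

lemma inclusion_edge:
  assumes j: "j < m"
  obtains k where "k < n" "i (\<alpha> (edge j)) = \<beta> (edge k)"
    "i (\<alpha> (vertex j)) = \<beta> (vertex k)" "i (\<alpha> (vertex (Suc j))) = \<beta> (vertex (Suc k))"
proof -
  have x: "\<alpha> (edge j) \<in> elems V" using iso_in[OF iso_\<alpha>] j by (simp add: path_ogp_elems)
  then have "i (\<alpha> (edge j)) \<in> \<beta> ` elems (path_ogp n)"
    using incl iso_elems[OF iso_\<beta>] unfolding inclusion_def is_map_def by blast
  then obtain y where y: "y \<in> elems (path_ogp n)" "i (\<alpha> (edge j)) = \<beta> y" by blast
  have bd: "bdm U b 0 (cl U {\<beta> y}) = {i (\<alpha> (vertex (if b then Suc j else j)))}" for b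
    using i_bdm_cl[OF x, of b] bdm_cl_iso_path_ogp_edge[OF wf_V iso_\<alpha> j] y(2) by simp
  have "vertex j \<in> elems (path_ogp m)" "vertex (Suc j) \<in> elems (path_ogp m)"
    using j by (simp_all add: path_ogp_elems)
  then have "\<alpha> (vertex j) \<noteq> \<alpha> (vertex (Suc j))" "\<alpha> (vertex j) \<in> elems V" "\<alpha> (vertex (Suc j)) \<in> elems V"
    using iso_inj[OF iso_\<alpha>] iso_in[OF iso_\<alpha>] by auto
  then have distinct: "i (\<alpha> (vertex j)) \<noteq> i (\<alpha> (vertex (Suc j)))"
    using incl unfolding inclusion_def inj_on_def by blast
  from y(1) show ?thesis
  proof (cases rule: path_ogp_elemsE)
    case (1 k)
    then have "bdm U b 0 (cl U {\<beta> y}) = {\<beta> y}" for b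
      using bdm_cl_iso_path_ogp_vertex[OF wf_U iso_\<beta>] by simp
    then show ?thesis using distinct bd[of False] bd[of True] by simp
  next
    case (2 k)
    then show ?thesis
      using that bd[of False] bd[of True] bdm_cl_iso_path_ogp_edge[OF wf_U iso_\<beta>] y(2) by simp
  qed
qed

lemma inclusion_path_shift:
  obtains s where "s + m \<le> n" "\<forall>x\<in>elems (path_ogp m). i (\<alpha> x) = \<beta> (path_shift s x)"
proof -
  obtain s where s: "s < n" "i (\<alpha> (vertex 0)) = \<beta> (vertex s)"
    using inclusion_edge[of 0] m by (metis le_simps(3) One_nat_def)
  have vertices: "i (\<alpha> (vertex j)) = \<beta> (vertex (s + j)) \<and> s + j \<le> n" if "j \<le> m" for j
    using that
  proof (induction j)
    case 0
    then show ?case using s by simp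
  next
    case (Suc j)
    then have IH: "i (\<alpha> (vertex j)) = \<beta> (vertex (s + j))" "s + j \<le> n" by auto
    obtain k where "k < n" "i (\<alpha> (vertex j)) = \<beta> (vertex k)" "i (\<alpha> (vertex (Suc j))) = \<beta> (vertex (Suc k))"
      using inclusion_edge[of j] Suc.prems by auto
    moreover from this have "k = s + j" using \<beta>_vertex_inject IH by simp
    ultimately show ?case by simp
  qed
  have edges: "i (\<alpha> (edge j)) = \<beta> (edge (s + j))" if j: "j < m" for j
  proof -
    obtain k where "k < n" "i (\<alpha> (edge j)) = \<beta> (edge k)" "i (\<alpha> (vertex j)) = \<beta> (vertex k)"
      using inclusion_edge[OF j] by auto
    moreover from this have "k = s + j" using \<beta>_vertex_inject vertices[of j] j by simp
    ultimately show ?thesis by simp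
  qed
  have "s + m \<le> n" using vertices[of m] by simp
  moreover have "\<forall>x\<in>elems (path_ogp m). i (\<alpha> x) = \<beta> (path_shift s x)"
    using vertices edges by (auto simp: path_ogp_elems)
  ultimately show ?thesis using that by blast
qed

end

theorem proposition4p3:
  fixes i :: "'a \<Rightarrow> 'b" and V :: "'a ogp" and U :: "'b ogp"
  assumes "regular_molecule V" and "regular_molecule U"
    and "ogp_dim V = 1" and "ogp_dim U = 1"
    and "inclusion i V U"
  shows "submolecule_inclusion i V U"
proof -
  obtain m \<alpha> where m: "1 \<le> m" and \<alpha>: "iso \<alpha> (path_ogp m) V"
    using regular_molecule_dim_1_path[OF assms(1,3)] .
  obtain n \<beta> where \<beta>: "iso \<beta> (path_ogp n) U"
    using regular_molecule_dim_1_path[OF assms(2,4)] .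
  have wf: "wf_ogp V" "wf_ogp U"
    using assms(1,2) ogpos_imp_wf_ogp unfolding regular_molecule_def by blast+
  interpret path_inclusion V U i \<alpha> \<beta> m n
    using wf \<alpha> \<beta> assms(5) m by unfold_locales
  obtain s where s: "s + m \<le> n" "\<forall>x\<in>elems (path_ogp m). i (\<alpha> x) = \<beta> (path_shift s x)"
    using inclusion_path_shift .
  obtain X H g where X: "regmolE X" "subincE g (path_ogp m) X" "iso H (path_ogp n) X"
      "\<forall>x\<in>elems (path_ogp m). H (path_shift s x) = g x"
    using subincE_path_shift[OF m s(1)] .
  let ?a = "inv_into (elems (path_ogp m)) \<alpha>" and ?b = "H \<circ> inv_into (elems (path_ogp n)) \<beta>"
  have "?b (i (\<alpha> x)) = g x" if "x \<in> elems (path_ogp m)" for x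
    using s X(4) that iso_inv_into_f[OF \<beta> path_shift_in[OF that s(1)]] by simp
  then have "\<forall>y\<in>elems V. ?b (i y) = g (?a y)"
    using iso_f_inv_into[OF \<alpha>] iso_inv_into_in[OF \<alpha>] by metis
  then show ?thesis
    unfolding submolecule_inclusion_def
    using assms(5) X(2) iso_inv[OF wf_path_ogp \<alpha>] iso_comp[OF iso_inv[OF wf_path_ogp \<beta>] X(3)] by blast
qed

end
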